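(* Let $\Omega\subset\mathbb{R}^N$ be a bounded domain, $d_S,d_I>0$, and $\Lambda,\beta,\gamma$ positive continuous functions on $\bar{\Omega}$. Let $J:\mathbb{R}^N\to\mathbb{R}$ be continuous with $J(0)>0$, $J(x)=J(-x)\ge 0$, $\int_{\mathbb{R}^N}J=1$ and $\int_{\Omega}J(x-y)\,dy\not\equiv 1$. Consider $$\begin{cases}\partial_t S=d_S\int_{\mathbb{R}^N}J(x-y)(S(y,t)-S(x,t))\,dy+\Lambda(x)-\frac{\beta(x)SI}{S+I}+\gamma(x)I, & x\in\Omega,\ t>0,\\ \partial_t I=d_I\int_{\mathbb{R}^N}J(x-y)(I(y,t)-I(x,t))\,dy+\frac{\beta(x)SI}{S+I}-\gamma(x)I, & x\in\Omega,\ t>0,\\ S(x,0)=S_0(x),\ I(x,0)=I_0(x), & x\in\Omega,\\ S(x,t)=I(x,t)=0, & x\in\mathbb{R}^N\setminus\Omega,\ t>0,\end{cases}$$ where $\frac{SI}{S+I}$ is defined to be $0$ when $S=0$ or $I=0$, and the initial data $S_0,I_0\in C(\bar\Omega)$ satisfy $S_0\ge 0$, $I_0\ge 0$, $\int_\Omega I_0\,dx>0$. Let $S_*\in C(\bar\Omega)$ be the unique positive solution of $d_S\int_{\mathbb{R}^N}J(x-y)(S_*(y)-S_*(x))\,dy+\Lambda(x)=0$ in $\Omega$, $S_*=0$ on $\mathbb{R}^N\setminus\Omega$, so that $(S_*,0)$ is the disease-free equilibrium. Let $R_0$ be the basic reproduction number defined in the context. If $R_0<1$, then the (unique, nonnegative)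 solution $(S(x,t),I(x,t))$ satisfies $S(\cdot,t)\to S_*$ and $I(\cdot,t)\to 0$ uniformly on $\bar{\Omega}$ as $t\to+\infty$.
   Context: Basic reproduction number: on $X=C(\bar\Omega)$, let $T(t)$ be the semigroup generated by $A[u](x)=d_I\left(\int_{\Omega}J(x-y)u(y)\,dy-u(x)\right)-\gamma(x)u(x)$, let $\mathscr{L}[\phi](x)=\beta(x)\int_0^\infty (T(t)\phi)(x)\,dt$, and let $R_0=r(\mathscr{L})$ be the spectral radius of $\mathscr{L}$. *)

theory Defs
  imports "HOL-Analysis.Analysis"
begin

definition nlA :: "'a::euclidean_space set \<Rightarrow> ('a \<Rightarrow> real) \<Rightarrow> real \<Rightarrow> ('a \<Rightarrow> real)
    \<Rightarrow> ('a \<Rightarrow> real) \<Rightarrow> ('a \<Rightarrow> real)" where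
  "nlA \<Omega> J dI \<gamma> u = (\<lambda>x. dI * ((LINT y:\<Omega>|lborel. J (x - y) * u y) - u x) - \<gamma> x * u x)"

definition nlT :: "'a::euclidean_space set \<Rightarrow> ('a \<Rightarrow> real) \<Rightarrow> real \<Rightarrow> ('a \<Rightarrow> real)
    \<Rightarrow> real \<Rightarrow> ('a \<Rightarrow> real) \<Rightarrow> ('a \<Rightarrow> real)" where
  "nlT \<Omega> J dI \<gamma> t \<phi> = (\<lambda>x. \<Sum>k. t ^ k / fact k * ((nlA \<Omega> J dI \<gamma> ^^ k) \<phi>) x)"

definition nextgen :: "'a::euclidean_space set \<Rightarrow> ('a \<Rightarrow> real) \<Rightarrow> real \<Rightarrow> ('a \<Rightarrow> real)
    \<Rightarrow> ('a \<Rightarrow> real) \<Rightarrow> ('a \<Rightarrow> real) \<Rightarrow> ('a \<Rightarrow> real)" where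
  "nextgen \<Omega> J dI \<gamma> \<beta> \<phi> = (\<lambda>x. \<beta> x * (LINT t:{0..}|lborel. nlT \<Omega> J dI \<gamma> t \<phi> x))"

definition opnorm_on :: "'a::topological_space set \<Rightarrow> (('a \<Rightarrow> real) \<Rightarrow> ('a \<Rightarrow> real)) \<Rightarrow> real" where
  "opnorm_on K L = (SUP \<phi>\<in>{\<phi>. continuous_on K \<phi> \<and> (\<forall>x\<in>K. \<bar>\<phi> x\<bar> \<le> 1)}. (SUP x\<in>K. \<bar>L \<phi> x\<bar>))"

text \<open>Spectral radius of a bounded operator on C(K), via the Gelfand formula
  r(L) = lim_n ||L^n||^(1/n).\<close>
definition spectral_radius_on :: "'a::topological_space set \<Rightarrow> (('a \<Rightarrow> real) \<Rightarrow> ('a \<Rightarrow> real)) \<Rightarrow> real" where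
  "spectral_radius_on K L = lim (\<lambda>n. opnorm_on K (L ^^ n) powr (1 / real n))"

definition R0 :: "'a::euclidean_space set \<Rightarrow> ('a \<Rightarrow> real) \<Rightarrow> real \<Rightarrow> ('a \<Rightarrow> real)
    \<Rightarrow> ('a \<Rightarrow> real) \<Rightarrow> real" where
  "R0 \<Omega> J dI \<gamma> \<beta> = spectral_radius_on (closure \<Omega>) (nextgen \<Omega> J dI \<gamma> \<beta>)"

definition incid :: "real \<Rightarrow> real \<Rightarrow> real" where
  "incid s i = (if s = 0 \<or> i = 0 then 0 else s * i / (s + i))"

end

theory Submission
  imports Defs
begin

text \<open>
  Let \<open>A u = d\<^sub>I (conv u - u) - \<gamma> u\<close> be the linearised infection operator on \<open>C(closure \<Omega>)\<close>,
  where \<open>conv u x = \<integral>\<^sub>\<Omega> J (x - y) u y dy\<close>. Since \<open>\<gamma> \<ge> \<gamma>min > 0\<close>, the comparison principle gives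
  \<open>\<bar>exp (t A) u\<bar> \<le> exp (- \<gamma>min t / 2) \<parallel>u\<parallel>\<close>, hence \<open>\<integral>\<^sub>0\<^sup>\<infinity> exp (t A) dt = (- A)\<^sup>-\<^sup>1 = G\<close>, a positive
  operator given by a Neumann series, and the next-generation operator is \<open>L = \<beta> G\<close>. The norms
  \<open>\<parallel>L\<^sup>n\<parallel>\<close> are submultiplicative, so by Fekete's lemma \<open>R\<^sub>0 = inf \<parallel>L\<^sup>n\<parallel>\<^sup>1\<^sup>/\<^sup>n\<close>, and \<open>R\<^sub>0 < 1\<close>
  yields \<open>\<parallel>L\<^sup>N\<parallel> \<le> 1/2\<close> for some \<open>N\<close>. Then \<open>w = G (\<Sum>k<N. L\<^sup>k 1)\<close> is a positive strict
  supersolution, \<open>(A + \<beta>) w \<le> -1/2\<close>, and since \<open>SI/(S+I) \<le> I\<close> the comparison principle bounds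
  \<open>I\<close> by \<open>C exp (- \<epsilon> t) w\<close>. Finally \<open>S - S\<^sub>*\<close> solves the dispersal equation of \<open>S\<close> with an
  exponentially small forcing, for which \<open>S\<^sub>*\<close> is itself a strict supersolution
  (\<open>d\<^sub>S (conv S\<^sub>* - S\<^sub>*) = - \<Lambda> < 0\<close>), so \<open>S - S\<^sub>*\<close> decays exponentially as well.
\<close>

section \<open>Continuity, series and limits\<close>

lemma continuous_on_fix_snd:
  assumes "continuous_on (A \<times> B) (\<lambda>(x, t). f x t)" "t \<in> B"
  shows "continuous_on A (\<lambda>x. f x t)"
proof -
  have "continuous_on A (\<lambda>x. (\<lambda>(x, t). f x t) (x, t))"
    by (rule continuous_on_compose2[OF assms(1)]) (use assms(2) in \<open>auto intro!: continuous_intros\<close>)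
  then show ?thesis by simp
qed

lemma continuous_on_fix_fst:
  assumes "continuous_on (A \<times> B) (\<lambda>(x, t). f x t)" "x \<in> A"
  shows "continuous_on B (f x)"
proof -
  have "continuous_on B (\<lambda>t. (\<lambda>(x, t). f x t) (x, t))"
    by (rule continuous_on_compose2[OF assms(1)]) (use assms(2) in \<open>auto intro!: continuous_intros\<close>)
  then show ?thesis by simp
qed

lemma continuous_on_comp_fst:
  assumes "continuous_on A f"
  shows "continuous_on (A \<times> B) (\<lambda>(x, t). f x)"
  unfolding case_prod_unfold
  by (rule continuous_on_compose2[OF assms]) (auto intro!: continuous_intros)

lemma continuous_on_suminf_Weierstrass:
  fixes f :: "nat \<Rightarrow> 'b::topological_space \<Rightarrow> real"
  assumes c: "\<And>k. continuous_on S (f k)" and b: "\<And>k x. x \<in> S \<Longrightarrow> \<bar>f k x\<bar> \<le> M k"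
    and s: "summable M"
  shows "continuous_on S (\<lambda>x. \<Sum>k. f k x)"
proof (rule uniform_limit_theorem)
  show "uniform_limit S (\<lambda>n x. \<Sum>i<n. f i x) (\<lambda>x. \<Sum>k. f k x) sequentially"
    by (rule Weierstrass_m_test) (use b s in auto)
  show "\<forall>\<^sub>F n in sequentially. continuous_on S (\<lambda>x. \<Sum>i<n. f i x)"
    by (intro always_eventually allI continuous_on_sum c)
qed simp

lemma summable_exp_series_mult:
  fixes r N :: real
  shows "summable (\<lambda>k. r ^ k / fact k * N)"
  using summable_mult2[OF summable_exp[of r], of N] by (simp add: field_simps)

lemma integrable_exp_neg:
  fixes a :: real
  assumes a: "0 < a"
  shows "integrable lborel (\<lambda>t. exp (- a * t) * indicator {0..} t)"
proof -
  have "(\<lambda>x. exp (- a * x)) absolutely_integrable_on {0..}"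
    by (rule nonnegative_absolutely_integrable_1[OF integrable_on_exp_minus_to_infinity[OF a]]) auto
  then have "integrable lebesgue (\<lambda>x. indicator {0..} x *\<^sub>R exp (- a * x))"
    unfolding set_integrable_def .
  then have "integrable lborel (\<lambda>x. indicator {0..} x *\<^sub>R exp (- a * x))"
    by (subst (asm) integrable_completion) auto
  then show ?thesis by (simp add: mult.commute)
qed

lemma exp_neg_tendsto_zero:
  fixes C \<epsilon> :: real
  assumes "0 < \<epsilon>"
  shows "((\<lambda>t. C * exp (- \<epsilon> * t)) \<longlongrightarrow> 0) at_top"
proof -
  have "filterlim (\<lambda>t. - \<epsilon> * t) at_bot at_top"
    using filterlim_tendsto_pos_mult_at_top[OF tendsto_const assms filterlim_ident]
    by (simp add: filterlim_uminus_at_bot)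
  then have "((\<lambda>t. C * exp (- \<epsilon> * t)) \<longlongrightarrow> C * 0) at_top"
    by (intro tendsto_intros filterlim_compose[OF exp_at_bot])
  then show ?thesis by simp
qed

lemma tendsto_integral_Icc_exp_dominated:
  fixes f :: "real \<Rightarrow> real"
  assumes f: "f \<in> borel_measurable borel" and bound: "\<And>t. 0 \<le> t \<Longrightarrow> \<bar>f t\<bar> \<le> C * exp (- \<epsilon> * t)"
    and \<epsilon>: "0 < \<epsilon>"
  shows "((\<lambda>s. \<integral>t. f t * indicator {0..s} t \<partial>lborel) \<longlongrightarrow> (\<integral>t. f t * indicator {0..} t \<partial>lborel)) at_top"
proof (rule integral_dominated_convergence_at_top[where w="\<lambda>t. C * exp (- \<epsilon> * t) * indicator {0..} t"])
  show "integrable lborel (\<lambda>t. C * exp (- \<epsilon> * t) * indicator {0..} t)"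
    using integrable_mult_right[OF integrable_exp_neg[OF \<epsilon>], of C] by (simp add: ac_simps)
  show "AE t in lborel. ((\<lambda>s. f t * indicator {0..s} t) \<longlongrightarrow> f t * indicator {0..} t) at_top"
  proof (intro AE_I2 tendsto_eventually)
    fix t :: real
    show "\<forall>\<^sub>F s in at_top. f t * indicator {0..s} t = f t * indicator {0..} t"
      using eventually_ge_at_top[of t] by (auto elim: eventually_mono split: split_indicator)
  qed
  show "\<forall>\<^sub>F s in at_top. AE t in lborel. norm (f t * indicator {0..s} t) \<le> C * exp (- \<epsilon> * t) * indicator {0..} t"
    using bound order_trans[OF abs_ge_zero bound]
    by (intro always_eventually allI AE_I2) (auto split: split_indicator)
qed (use f in measurable)

lemma uniform_limit_exp_squeeze:
  fixes f :: "'a \<Rightarrow> real \<Rightarrow> real"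
  assumes upper: "\<And>x t. x \<in> X \<Longrightarrow> 0 \<le> t \<Longrightarrow> f x t - g x \<le> C * exp (- \<epsilon> * t)"
    and lower: "\<And>x t. x \<in> X \<Longrightarrow> 0 \<le> t \<Longrightarrow> g x - f x t \<le> C' * exp (- \<epsilon>' * t)"
    and \<epsilon>: "0 < \<epsilon>" "0 < \<epsilon>'"
  shows "uniform_limit X (\<lambda>t x. f x t) g at_top"
proof (rule uniform_limitI)
  fix e :: real assume e: "0 < e"
  have small: "\<forall>\<^sub>F t in at_top. C * exp (- \<epsilon> * t) < e" if "0 < \<epsilon>" for C \<epsilon> :: real
    using order_tendstoD(2)[OF exp_neg_tendsto_zero[OF that] e] .
  show "\<forall>\<^sub>F t in at_top. \<forall>x\<in>X. dist (f x t) (g x) < e"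
    using small[OF \<epsilon>(1), of C] small[OF \<epsilon>(2), of C'] eventually_ge_at_top[of "0::real"]
  proof eventually_elim
    case (elim t)
    then show ?case using upper lower by (force simp: dist_real_def abs_less_iff)
  qed
qed

section \<open>Submultiplicative sequences\<close>

lemma less_power_of_root_less:
  fixes x \<rho> :: real
  assumes "0 \<le> x" "1 \<le> m" "x powr (1 / real m) < \<rho>"
  shows "x < \<rho> ^ m"
proof (cases "x = 0")
  case False
  then have "x = (x powr (1 / real m)) ^ m"
    using assms(1,2) by (simp add: powr_powr powr_realpow[symmetric])
  also have "\<dots> < \<rho> ^ m" using assms by (intro power_strict_mono) auto
  finally show ?thesis .
qed (use assms in auto)

lemma submultiplicative_le_power:
  fixes a :: "nat \<Rightarrow> real"
  assumes nn: "\<And>n. 0 \<le> a n" and sub: "\<And>m n. a (m + n) \<le> a m * a n"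
    and m: "1 \<le> m" and \<rho>: "0 < \<rho>" and am: "a m \<le> \<rho> ^ m"
  shows "\<exists>C>0. \<forall>n. a n \<le> C * \<rho> ^ n"
proof -
  have iterate: "a (q * m + s) \<le> a m ^ q * a s" for q s
  proof (induction q)
    case (Suc q)
    have "a (Suc q * m + s) \<le> a m * a (q * m + s)" using sub[of m "q * m + s"]
      by (simp add: add.assoc)
    also have "\<dots> \<le> a m * (a m ^ q * a s)" by (rule mult_left_mono[OF Suc nn])
    finally show ?case by (simp add: ac_simps)
  qed simp
  define C0 where "C0 = (\<Sum>s<m. a s) + 1"
  have C0: "a s \<le> C0" if "s < m" for s
    using that nn member_le_sum[of s "{..<m}" a] unfolding C0_def by fastforce
  have C0_pos: "0 < C0" unfolding C0_def using nn by (simp add: add_nonneg_pos sum_nonneg)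
  define c where "c = min 1 (\<rho> ^ m)"
  have c: "0 < c" unfolding c_def using \<rho> by simp
  have "a n \<le> C0 / c * \<rho> ^ n" for n
  proof -
    define q s where "q = n div m" and "s = n mod m"
    have n: "n = q * m + s" and s: "s < m" unfolding q_def s_def using m by auto
    have "c \<le> \<rho> ^ s"
      unfolding c_def using power_decreasing[of s m \<rho>] one_le_power[of \<rho> s] \<rho> s
      by (cases "\<rho> \<le> 1") (auto simp: min_le_iff_disj)
    have "a n \<le> (\<rho> ^ m) ^ q * C0"
      unfolding n using iterate[of q s] am C0[OF s] nn \<rho>
      by (meson mult_mono order_trans power_mono zero_le_power less_imp_le)
    also have "\<dots> * c \<le> \<rho> ^ (q * m) * \<rho> ^ s * C0"
      using \<open>c \<le> \<rho> ^ s\<close> \<rho> C0_pos by (simp add: power_mult mult.commute mult_left_mono)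
    also have "\<dots> = C0 * \<rho> ^ n" unfolding n by (simp add: power_add)
    finally show ?thesis using c by (simp add: field_simps)
  qed
  then show ?thesis using C0_pos c by (intro exI[of _ "C0 / c"]) auto
qed

lemma submultiplicative_root_tendsto_Inf:
  fixes a :: "nat \<Rightarrow> real"
  assumes nn: "\<And>n. 0 \<le> a n" and sub: "\<And>m n. a (m + n) \<le> a m * a n"
  shows "(\<lambda>n. a n powr (1 / real n)) \<longlonglongrightarrow> (INF n\<in>{1..}. a n powr (1 / real n))"
    (is "?b \<longlonglongrightarrow> ?r")
proof -
  have bdd: "bdd_below (?b ` {1..})" by (intro bdd_belowI2[where m=0]) auto
  show ?thesis
  proof (rule order_tendstoI)
    fix y assume "y < ?r"
    show "\<forall>\<^sub>F n in sequentially. y < ?b n"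
      using eventually_ge_at_top[of 1] by eventually_elim (use \<open>y < ?r\<close> cINF_lower[OF bdd] in force)
  next
    fix y assume "?r < y"
    then obtain \<rho> where "?r < \<rho>" "\<rho> < y" using dense by blast
    then obtain m where m: "1 \<le> m" "?b m < \<rho>" using cINF_less_iff[OF _ bdd] by auto
    have "0 \<le> ?r" by (intro cINF_greatest) auto
    then have \<rho>: "0 < \<rho>" using \<open>?r < \<rho>\<close> by simp
    obtain C where C: "0 < C" "\<And>n. a n \<le> C * \<rho> ^ n"
      using submultiplicative_le_power[OF nn sub m(1) \<rho> less_imp_le[OF less_power_of_root_less[OF nn m]]]
      by blast
    have root_le: "?b n \<le> C powr (1 / real n) * \<rho>" if "1 \<le> n" for n
    proof -
      have "?b n \<le> (C * \<rho> ^ n) powr (1 / real n)" using C(2) nn by (intro powr_mono2) auto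
      also have "\<dots> = C powr (1 / real n) * \<rho>"
        using C(1) \<rho> that by (simp add: powr_mult powr_realpow[symmetric] powr_powr)
      finally show ?thesis .
    qed
    have "(\<lambda>n. C powr (1 / real n) * \<rho>) \<longlonglongrightarrow> C powr 0 * \<rho>"
      by (intro tendsto_intros lim_const_over_n) (use C(1) in auto)
    then have "\<forall>\<^sub>F n in sequentially. C powr (1 / real n) * \<rho> < y"
      using C(1) \<open>\<rho> < y\<close> by (intro order_tendstoD(2)) auto
    then show "\<forall>\<^sub>F n in sequentially. ?b n < y"
      using eventually_ge_at_top[of 1] by eventually_elim (use root_le in force)
  qed
qed

section \<open>The incidence function\<close>

lemma incid_nonneg: "0 \<le> s \<Longrightarrow> 0 \<le> i \<Longrightarrow> 0 \<le> incid s i"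
  unfolding incid_def by simp

lemma incid_le: "0 \<le> s \<Longrightarrow> 0 \<le> i \<Longrightarrow> incid s i \<le> i"
  unfolding incid_def by (auto simp: divide_le_eq algebra_simps)

lemma continuous_on_incid_quadrant: "continuous_on {p. 0 \<le> fst p \<and> 0 \<le> snd p} (\<lambda>p. incid (fst p) (snd p))"
proof -
  define Q where "Q = {p :: real \<times> real. 0 \<le> fst p \<and> 0 \<le> snd p}"
  define h where "h p = fst p * snd p / (fst p + snd p)" for p :: "real \<times> real"
  have eq: "incid (fst p) (snd p) = h p" if "p \<in> Q" for p
    using that unfolding Q_def h_def incid_def by auto
  have "continuous (at p within Q) h" if p: "p \<in> Q" for p
  proof (cases "p = (0, 0)")
    case False
    then have "fst p + snd p \<noteq> 0" using p unfolding Q_def by (cases p) auto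
    then have "isCont h p" unfolding h_def by (intro continuous_intros) auto
    then show ?thesis by (rule continuous_at_imp_continuous_within)
  next
    case True
    have "(h \<longlongrightarrow> 0) (at p within Q)"
    proof (rule Lim_null_comparison)
      show "\<forall>\<^sub>F q in at p within Q. norm (h q) \<le> norm q"
        unfolding eventually_at_filter
      proof (intro always_eventually allI impI)
        fix q :: "real \<times> real" assume "q \<noteq> p" "q \<in> Q"
        then have q: "0 \<le> fst q" "0 \<le> snd q" unfolding Q_def by auto
        have "norm (h q) = incid (fst q) (snd q)" using eq[OF \<open>q \<in> Q\<close>] incid_nonneg[OF q] by simp
        also have "\<dots> \<le> snd q" using incid_le[OF q] .
        also have "\<dots> \<le> norm q" using norm_snd_le[of "snd q" "fst q"] by simp
        finally show "norm (h q) \<le> norm q" .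
      qed
      show "((\<lambda>q. norm q) \<longlongrightarrow> 0) (at p within Q)"
        using True by (intro tendsto_norm_zero) (simp add: zero_prod_def tendsto_ident_at)
    qed
    then show ?thesis using True unfolding continuous_within h_def by simp
  qed
  then have "continuous_on Q h" by (simp add: continuous_on_eq_continuous_within)
  then show ?thesis unfolding Q_def[symmetric] by (rule continuous_on_eq) (use eq in auto)
qed

lemma continuous_on_incid:
  assumes "continuous_on X f" "continuous_on X g" "\<And>z. z \<in> X \<Longrightarrow> 0 \<le> f z \<and> 0 \<le> g z"
  shows "continuous_on X (\<lambda>z. incid (f z) (g z))"
proof -
  have "continuous_on X (\<lambda>z. (\<lambda>p. incid (fst p) (snd p)) (f z, g z))"
    by (rule continuous_on_compose2[OF continuous_on_incid_quadrant continuous_on_Pair[OF assms(1,2)]])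
       (use assms(3) in auto)
  then show ?thesis by simp
qed

section \<open>The nonlocal dispersal operator\<close>

locale nonlocal_domain =
  fixes \<Omega> :: "'a::euclidean_space set" and J :: "'a \<Rightarrow> real"
  assumes open_dom: "open \<Omega>" and bounded_dom: "bounded \<Omega>" and dom_nonempty: "\<Omega> \<noteq> {}"
    and continuous_J: "continuous_on UNIV J" and J_nonneg: "\<And>x. J x \<ge> 0"
    and J_even: "\<And>x. J x = J (- x)"
    and integrable_J: "integrable lborel J" and integral_J: "(LINT x|lborel. J x) = 1"
begin

abbreviation "K \<equiv> closure \<Omega>"

definition conv :: "('a \<Rightarrow> real) \<Rightarrow> 'a \<Rightarrow> real" where
  "conv u x = (LINT y:\<Omega>|lborel. J (x - y) * u y)"

definition supn :: "('a \<Rightarrow> real) \<Rightarrow> real" where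
  "supn u = (SUP x\<in>K. \<bar>u x\<bar>)"

lemma compact_K: "compact K"
  using bounded_dom by (simp add: compact_closure)

lemma K_nonempty: "K \<noteq> {}"
  using dom_nonempty by simp

lemma dom_subset_K: "\<Omega> \<subseteq> K"
  by (rule closure_subset)

lemma dom_sets[measurable]: "\<Omega> \<in> sets lborel"
  using open_dom by simp

lemma emeasure_dom_finite: "emeasure lborel \<Omega> < \<infinity>"
  using bounded_dom by (rule emeasure_bounded_finite)

lemma J_measurable[measurable]: "J \<in> borel_measurable borel"
  using continuous_J by (rule borel_measurable_continuous_onI)

lemma bounded_on_K:
  fixes u :: "'a \<Rightarrow> real"
  assumes "continuous_on K u"
  shows "\<exists>B. \<forall>y\<in>K. \<bar>u y\<bar> \<le> B"
proof -
  have "compact (u ` K)" by (intro compact_continuous_image compact_K assms)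
  then obtain B where "\<forall>z\<in>u ` K. norm z \<le> B"
    using compact_imp_bounded bounded_iff by metis
  then show ?thesis by auto
qed

lemma pos_lower_bound_on_K:
  fixes u :: "'a \<Rightarrow> real"
  assumes "continuous_on K u" "\<And>x. x \<in> K \<Longrightarrow> 0 < u x"
  shows "\<exists>m>0. \<forall>x\<in>K. m \<le> u x"
proof -
  obtain x0 where "x0 \<in> K" "\<And>y. y \<in> K \<Longrightarrow> u x0 \<le> u y"
    using continuous_attains_inf[OF compact_K K_nonempty assms(1)] by blast
  then show ?thesis using assms(2) by blast
qed

lemma indicator_mult_measurable:
  fixes u :: "'a \<Rightarrow> real"
  assumes "continuous_on K u"
  shows "(\<lambda>y. indicator \<Omega> y * u y) \<in> borel_measurable lborel"
proof -
  have "continuous_on \<Omega> u" using assms dom_subset_K continuous_on_subset by blast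
  then have "(\<lambda>y. indicator \<Omega> y *\<^sub>R u y) \<in> borel_measurable borel"
    by (intro borel_measurable_continuous_on_indicator) (use open_dom in auto)
  then show ?thesis by simp
qed

lemma set_integrable_dom:
  fixes u :: "'a \<Rightarrow> real"
  assumes u: "continuous_on K u"
  shows "set_integrable lborel \<Omega> u"
proof -
  obtain B where B: "\<forall>y\<in>K. \<bar>u y\<bar> \<le> B" using bounded_on_K[OF u] by blast
  show ?thesis unfolding set_integrable_def
  proof (rule integrableI_bounded_set[where A=\<Omega> and B=B])
    show "(\<lambda>y. indicator \<Omega> y *\<^sub>R u y) \<in> borel_measurable lborel"
      using indicator_mult_measurable[OF u] by simp
    show "AE y in lborel. y \<in> \<Omega> \<longrightarrow> norm (indicator \<Omega> y *\<^sub>R u y) \<le> B"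
      using B dom_subset_K by (intro AE_I2) auto
  qed (use emeasure_dom_finite open_dom in auto)
qed

lemma set_integrable_conv:
  fixes u :: "'a \<Rightarrow> real"
  assumes "continuous_on K u"
  shows "set_integrable lborel \<Omega> (\<lambda>y. J (x - y) * u y)"
proof (rule set_integrable_dom)
  show "continuous_on K (\<lambda>y. J (x - y) * u y)"
    by (intro continuous_intros assms continuous_on_compose2[OF continuous_J]) auto
qed

lemma J_translate: "integrable lborel (\<lambda>y. J (x - y))" "(LINT y|lborel. J (x - y)) = 1"
proof -
  have eq: "\<And>y. J (x - y) = J (- x + y)" using J_even by (metis minus_diff_eq uminus_add_conv_diff)
  have d: "distr lborel borel ((+) (- x)) = lborel" by (rule lborel_distr_plus)
  have "integrable (distr lborel borel ((+) (- x))) J" using d integrable_J by simp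
  then have "integrable lborel (\<lambda>y. J (- x + y))"
    by (subst (asm) integrable_distr_eq) auto
  then show "integrable lborel (\<lambda>y. J (x - y))" using eq by simp
  have "integral\<^sup>L (distr lborel borel ((+) (- x))) J = (LINT y|lborel. J (- x + y))"
    by (rule integral_distr) auto
  then show "(LINT y|lborel. J (x - y)) = 1" using d integral_J eq by simp
qed

lemma dom_mass_bounds: "0 \<le> (LINT y:\<Omega>|lborel. J (x - y))" "(LINT y:\<Omega>|lborel. J (x - y)) \<le> 1"
proof -
  show "0 \<le> (LINT y:\<Omega>|lborel. J (x - y))"
    unfolding set_lebesgue_integral_def
    by (rule integral_nonneg_AE) (auto intro!: AE_I2 simp: J_nonneg)
  have "(LINT y:\<Omega>|lborel. J (x - y)) = (LINT y|lborel. indicator \<Omega> y * J (x - y))"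
    unfolding set_lebesgue_integral_def by simp
  also have "\<dots> \<le> (LINT y|lborel. J (x - y))"
    using set_integrable_conv[of "\<lambda>_. 1" x] J_translate(1)[of x] unfolding set_integrable_def
    by (intro integral_mono) (auto simp: J_nonneg split: split_indicator)
  finally show "(LINT y:\<Omega>|lborel. J (x - y)) \<le> 1" using J_translate(2) by simp
qed

lemma abs_le_supn:
  fixes u :: "'a \<Rightarrow> real"
  assumes "continuous_on K u" "x \<in> K"
  shows "\<bar>u x\<bar> \<le> supn u"
proof -
  obtain B where "\<forall>y\<in>K. \<bar>u y\<bar> \<le> B" using bounded_on_K[OF assms(1)] by blast
  then have "bdd_above ((\<lambda>x. \<bar>u x\<bar>) ` K)" by (auto intro: bdd_aboveI2)
  then show ?thesis unfolding supn_def using assms(2) by (rule cSUP_upper2) simp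
qed

lemma supn_le:
  fixes u :: "'a \<Rightarrow> real"
  assumes "\<And>x. x \<in> K \<Longrightarrow> \<bar>u x\<bar> \<le> B"
  shows "supn u \<le> B"
  unfolding supn_def using K_nonempty assms by (intro cSUP_least) auto

lemma supn_nonneg:
  fixes u :: "'a \<Rightarrow> real"
  assumes "continuous_on K u"
  shows "0 \<le> supn u"
proof -
  obtain x where "x \<in> K" using K_nonempty by (meson ex_in_conv)
  then show ?thesis using abs_le_supn[OF assms] by (meson abs_ge_zero order_trans)
qed

lemma supn_uminus: "supn (\<lambda>y. - u y) = supn u"
  unfolding supn_def by simp

lemma conv_cong: "(\<And>y. y \<in> \<Omega> \<Longrightarrow> u y = v y) \<Longrightarrow> conv u x = conv v x"
  unfolding conv_def by (rule set_lebesgue_integral_cong) (use open_dom in auto)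

lemma conv_add:
  fixes u v :: "'a \<Rightarrow> real"
  assumes "continuous_on K u" "continuous_on K v"
  shows "conv (\<lambda>y. u y + v y) x = conv u x + conv v x"
  unfolding conv_def using set_integrable_conv[OF assms(1)] set_integrable_conv[OF assms(2)]
  by (simp add: distrib_left)

lemma conv_diff:
  fixes u v :: "'a \<Rightarrow> real"
  assumes "continuous_on K u" "continuous_on K v"
  shows "conv (\<lambda>y. u y - v y) x = conv u x - conv v x"
  unfolding conv_def using set_integrable_conv[OF assms(1)] set_integrable_conv[OF assms(2)]
  by (simp add: right_diff_distrib)

lemma conv_scale: "conv (\<lambda>y. c * u y) x = c * conv u x"
  unfolding conv_def by (simp add: mult.left_commute)

lemma conv_const: "conv (\<lambda>y. c) x = c * (LINT y:\<Omega>|lborel. J (x - y))"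
  unfolding conv_def by (simp add: mult.commute)

lemma conv_mono:
  fixes u v :: "'a \<Rightarrow> real"
  assumes "continuous_on K u" "continuous_on K v" "\<And>y. y \<in> \<Omega> \<Longrightarrow> u y \<le> v y"
  shows "conv u x \<le> conv v x"
  unfolding conv_def
  using set_integrable_conv[OF assms(1)] set_integrable_conv[OF assms(2)] assms(3)
  by (intro set_integral_mono) (auto intro!: mult_left_mono simp: J_nonneg)

lemma conv_nonneg:
  fixes u :: "'a \<Rightarrow> real"
  assumes "continuous_on K u" "\<And>y. y \<in> \<Omega> \<Longrightarrow> 0 \<le> u y"
  shows "0 \<le> conv u x"
  using conv_mono[of "\<lambda>_. 0" u x] assms by (simp add: conv_def)

lemma conv_le_const:
  fixes u :: "'a \<Rightarrow> real"
  assumes "continuous_on K u" "\<And>y. y \<in> \<Omega> \<Longrightarrow> u y \<le> c" "0 \<le> c"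
  shows "conv u x \<le> c"
proof -
  have "conv u x \<le> conv (\<lambda>_. c) x" using assms by (intro conv_mono) auto
  also have "\<dots> \<le> c" unfolding conv_const using dom_mass_bounds[of x] assms(3)
    by (simp add: mult_left_le)
  finally show ?thesis .
qed

lemma abs_conv_le:
  fixes u :: "'a \<Rightarrow> real"
  assumes u: "continuous_on K u"
  shows "\<bar>conv u x\<bar> \<le> supn u"
proof -
  have b: "\<And>y. y \<in> \<Omega> \<Longrightarrow> \<bar>u y\<bar> \<le> supn u" using abs_le_supn[OF u] dom_subset_K by auto
  have "conv u x \<le> supn u"
    using b supn_nonneg[OF u] by (intro conv_le_const[OF u]) (auto simp: abs_le_iff)
  moreover have "conv (\<lambda>y. - u y) x \<le> supn u" using b supn_nonneg[OF u]
    by (intro conv_le_const) (auto simp: abs_le_iff intro!: continuous_intros u)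
  moreover have "conv (\<lambda>y. - u y) x = - conv u x" using conv_scale[of "-1" u x] by simp
  ultimately show ?thesis by auto
qed

lemma conv_lborel:
  fixes u :: "'a \<Rightarrow> real"
  assumes u: "continuous_on K u"
  shows "(LINT y|lborel. J (x - y) * (indicator \<Omega> y * u y - u x)) = conv u x - u x"
proof -
  have i1: "integrable lborel (\<lambda>y. indicator \<Omega> y *\<^sub>R (J (x - y) * u y))"
    using set_integrable_conv[OF u, of x] unfolding set_integrable_def .
  have i2: "integrable lborel (\<lambda>y. u x * J (x - y))" using J_translate(1)[of x] by simp
  have "(LINT y|lborel. J (x - y) * (indicator \<Omega> y * u y - u x))
      = (LINT y|lborel. indicator \<Omega> y *\<^sub>R (J (x - y) * u y) - u x * J (x - y))"
    by (intro Bochner_Integration.integral_cong) (auto simp: algebra_simps)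
  also have "\<dots> = conv u x - u x"
    using i1 i2 J_translate(2)[of x] by (simp add: conv_def set_lebesgue_integral_def)
  finally show ?thesis .
qed

lemma continuous_on_set_integral_param:
  fixes h :: "'p::metric_space \<Rightarrow> 'a \<Rightarrow> real"
  assumes P: "compact P" and h: "continuous_on (P \<times> K) (\<lambda>(p, y). h p y)"
  shows "continuous_on P (\<lambda>p. LINT y:\<Omega>|lborel. h p y)"
proof -
  have "compact ((\<lambda>(p, y). h p y) ` (P \<times> K))"
    by (intro compact_continuous_image h compact_Times P compact_K)
  then obtain B where B: "\<forall>z\<in>(\<lambda>(p, y). h p y) ` (P \<times> K). norm z \<le> B"
    using compact_imp_bounded bounded_iff by metis
  have hc: "continuous_on K (h p)" if "p \<in> P" for p
    using continuous_on_fix_fst[OF h that] .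
  show ?thesis
  proof (rule continuous_on_sequentiallyI)
    fix u a assume u: "\<forall>n. u n \<in> P" and a: "a \<in> P" and lim: "u \<longlonglongrightarrow> a"
    show "(\<lambda>n. LINT y:\<Omega>|lborel. h (u n) y) \<longlonglongrightarrow> (LINT y:\<Omega>|lborel. h a y)"
      unfolding set_lebesgue_integral_def
    proof (rule integral_dominated_convergence[where w="\<lambda>y. indicator \<Omega> y * B"])
      show "(\<lambda>y. indicator \<Omega> y *\<^sub>R h a y) \<in> borel_measurable lborel"
        using indicator_mult_measurable[OF hc[OF a]] by simp
      show "(\<lambda>y. indicator \<Omega> y *\<^sub>R h (u n) y) \<in> borel_measurable lborel" for n
        using indicator_mult_measurable[OF hc[OF u[rule_format, of n]]] by simp
      show "integrable lborel (\<lambda>y. indicator \<Omega> y * B)"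
        using set_integrable_dom[of "\<lambda>_. B"] unfolding set_integrable_def by simp
      show "AE y in lborel. (\<lambda>n. indicator \<Omega> y *\<^sub>R h (u n) y) \<longlonglongrightarrow> indicator \<Omega> y *\<^sub>R h a y"
      proof (intro AE_I2)
        fix y
        have "(\<lambda>n. h (u n) y) \<longlonglongrightarrow> h a y" if "y \<in> \<Omega>"
          using continuous_on_tendsto_compose[OF continuous_on_fix_snd[OF h] lim a] u that dom_subset_K
          by auto
        then show "(\<lambda>n. indicator \<Omega> y *\<^sub>R h (u n) y) \<longlonglongrightarrow> indicator \<Omega> y *\<^sub>R h a y"
          by (cases "y \<in> \<Omega>") auto
      qed
      show "AE y in lborel. norm (indicator \<Omega> y *\<^sub>R h (u n) y) \<le> indicator \<Omega> y * B" for n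
        using B u dom_subset_K by (intro AE_I2) (auto split: split_indicator)
    qed
  qed
qed

lemma continuous_on_conv_param:
  fixes f :: "'a \<Rightarrow> real \<Rightarrow> real"
  assumes fc: "continuous_on (K \<times> T) (\<lambda>(x, t). f x t)" and T: "compact T"
  shows "continuous_on (K \<times> T) (\<lambda>(x, t). conv (\<lambda>y. f y t) x)"
proof -
  have "continuous_on (K \<times> T) (\<lambda>p. LINT y:\<Omega>|lborel. J (fst p - y) * f y (snd p))"
  proof (rule continuous_on_set_integral_param)
    show "compact (K \<times> T)" by (intro compact_Times compact_K T)
    have 1: "continuous_on ((K \<times> T) \<times> K) (\<lambda>z. J (fst (fst z) - snd z))"
      by (rule continuous_on_compose2[OF continuous_J]) (auto intro!: continuous_intros)
    have 2: "continuous_on ((K \<times> T) \<times> K) (\<lambda>z. (\<lambda>(x, t). f x t) (snd z, snd (fst z)))"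
      by (rule continuous_on_compose2[OF fc]) (auto intro!: continuous_intros)
    show "continuous_on ((K \<times> T) \<times> K) (\<lambda>(p, y). J (fst p - y) * f y (snd p))"
      using continuous_on_mult[OF 1 2] by (simp add: case_prod_unfold)
  qed
  then show ?thesis unfolding conv_def by (simp add: case_prod_unfold)
qed

lemma continuous_on_conv:
  fixes u :: "'a \<Rightarrow> real"
  assumes u: "continuous_on K u"
  shows "continuous_on K (conv u)"
  unfolding conv_def
proof (rule continuous_on_set_integral_param[OF compact_K])
  have 1: "continuous_on (K \<times> K) (\<lambda>z. J (fst z - snd z))"
    by (rule continuous_on_compose2[OF continuous_J]) (auto intro!: continuous_intros)
  have 2: "continuous_on (K \<times> K) (\<lambda>z. u (snd z))"
    by (rule continuous_on_compose2[OF u]) (auto intro!: continuous_intros)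
  show "continuous_on (K \<times> K) (\<lambda>(p, y). J (p - y) * u y)"
    using continuous_on_mult[OF 1 2] by (simp add: case_prod_unfold)
qed

definition nonlocal_op :: "real \<Rightarrow> ('a \<Rightarrow> real) \<Rightarrow> ('a \<Rightarrow> real) \<Rightarrow> 'a \<Rightarrow> real" where
  "nonlocal_op a p u x = a * conv u x + p x * u x"

lemma continuous_on_nonlocal_op:
  fixes u :: "'a \<Rightarrow> real"
  assumes "continuous_on K p" "continuous_on K u" shows "continuous_on K (nonlocal_op a p u)"
  unfolding nonlocal_op_def[abs_def] using assms continuous_on_conv[OF assms(2)]
  by (intro continuous_intros) auto

lemma nonlocal_op_add:
  fixes u v :: "'a \<Rightarrow> real"
  assumes "continuous_on K u" "continuous_on K v"
  shows "nonlocal_op a p (\<lambda>y. u y + v y) x = nonlocal_op a p u x + nonlocal_op a p v x"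
  unfolding nonlocal_op_def conv_add[OF assms] by (simp add: algebra_simps)

lemma nonlocal_op_scale: "nonlocal_op a p (\<lambda>y. c * u y) x = c * nonlocal_op a p u x"
  unfolding nonlocal_op_def conv_scale by (simp add: algebra_simps)

lemma nonlocal_op_cong: "(\<And>y. y \<in> K \<Longrightarrow> u y = v y) \<Longrightarrow> x \<in> K \<Longrightarrow> nonlocal_op a p u x = nonlocal_op a p v x"
  unfolding nonlocal_op_def using conv_cong[of u v x] dom_subset_K by auto

lemma abs_nonlocal_op_le:
  fixes u :: "'a \<Rightarrow> real"
  assumes u: "continuous_on K u" and P: "\<And>x. x \<in> K \<Longrightarrow> \<bar>p x\<bar> \<le> P" and x: "x \<in> K"
  shows "\<bar>nonlocal_op a p u x\<bar> \<le> (\<bar>a\<bar> + P) * supn u"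
proof -
  have "\<bar>nonlocal_op a p u x\<bar> \<le> \<bar>a\<bar> * \<bar>conv u x\<bar> + \<bar>p x\<bar> * \<bar>u x\<bar>"
    unfolding nonlocal_op_def by (metis abs_mult abs_triangle_ineq)
  also have "\<dots> \<le> \<bar>a\<bar> * supn u + P * supn u"
    using abs_conv_le[OF u, of x] abs_le_supn[OF u x] P[OF x]
    by (intro add_mono mult_mono) auto
  finally show ?thesis by (simp add: algebra_simps)
qed

lemma continuous_on_nonlocal_op_pow:
  fixes u :: "'a \<Rightarrow> real"
  assumes "continuous_on K p" "continuous_on K u" shows "continuous_on K ((nonlocal_op a p ^^ k) u)"
  by (induction k) (auto intro: continuous_on_nonlocal_op assms)

lemma nonlocal_op_pow_add:
  fixes u v :: "'a \<Rightarrow> real"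
  assumes "continuous_on K p" "continuous_on K u" "continuous_on K v"
  shows "(nonlocal_op a p ^^ k) (\<lambda>y. u y + v y) = (\<lambda>x. (nonlocal_op a p ^^ k) u x + (nonlocal_op a p ^^ k) v x)"
proof (induction k)
  case (Suc k)
  show ?case
    using nonlocal_op_add[OF continuous_on_nonlocal_op_pow[OF assms(1,2)] continuous_on_nonlocal_op_pow[OF assms(1,3)]]
    by (simp add: Suc)
qed simp

lemma nonlocal_op_pow_scale: "(nonlocal_op a p ^^ k) (\<lambda>y. c * u y) = (\<lambda>x. c * (nonlocal_op a p ^^ k) u x)"
proof (induction k)
  case (Suc k)
  show ?case by (simp add: Suc nonlocal_op_scale)
qed simp

lemma nonlocal_op_pow_cong: "(\<And>y. y \<in> K \<Longrightarrow> u y = v y) \<Longrightarrow> x \<in> K \<Longrightarrow> (nonlocal_op a p ^^ k) u x = (nonlocal_op a p ^^ k) v x"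
proof (induction k arbitrary: x)
  case (Suc k)
  then show ?case by (auto intro!: nonlocal_op_cong)
qed simp

lemma supn_nonlocal_op_pow_le:
  fixes u :: "'a \<Rightarrow> real"
  assumes p: "continuous_on K p" and u: "continuous_on K u" and P: "\<And>x. x \<in> K \<Longrightarrow> \<bar>p x\<bar> \<le> P"
  shows "supn ((nonlocal_op a p ^^ k) u) \<le> (\<bar>a\<bar> + P) ^ k * supn u"
proof (induction k)
  case 0
  then show ?case by simp
next
  case (Suc k)
  have "supn ((nonlocal_op a p ^^ Suc k) u) \<le> (\<bar>a\<bar> + P) * supn ((nonlocal_op a p ^^ k) u)"
    using abs_nonlocal_op_le[OF continuous_on_nonlocal_op_pow[OF p u] P] by (intro supn_le) auto
  also have "\<dots> \<le> (\<bar>a\<bar> + P) * ((\<bar>a\<bar> + P) ^ k * supn u)"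
  proof (rule mult_left_mono[OF Suc])
    obtain x where "x \<in> K" using K_nonempty by (meson ex_in_conv)
    then show "0 \<le> \<bar>a\<bar> + P" using P[of x] by linarith
  qed
  finally show ?case by simp
qed

lemma summable_of_supn:
  fixes f :: "nat \<Rightarrow> 'a \<Rightarrow> real"
  assumes c: "\<And>k. continuous_on K (f k)" and s: "summable (\<lambda>k. supn (f k))" and x: "x \<in> K"
  shows "summable (\<lambda>k. f k x)" "summable (\<lambda>k. \<bar>f k x\<bar>)"
proof -
  show "summable (\<lambda>k. \<bar>f k x\<bar>)"
    by (rule summable_comparison_test[OF _ s]) (use abs_le_supn[OF c x] in auto)
  then show "summable (\<lambda>k. f k x)" by (rule summable_rabs_cancel)
qed

lemma continuous_on_suminf_supn:
  fixes f :: "nat \<Rightarrow> 'a \<Rightarrow> real"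
  assumes c: "\<And>k. continuous_on K (f k)" and s: "summable (\<lambda>k. supn (f k))"
  shows "continuous_on K (\<lambda>x. \<Sum>k. f k x)"
  by (rule continuous_on_suminf_Weierstrass[OF c _ s]) (use abs_le_supn[OF c] in auto)

lemma supn_suminf_le:
  fixes f :: "nat \<Rightarrow> 'a \<Rightarrow> real"
  assumes c: "\<And>k. continuous_on K (f k)" and s: "summable (\<lambda>k. supn (f k))"
  shows "supn (\<lambda>x. \<Sum>k. f k x) \<le> (\<Sum>k. supn (f k))"
proof (rule supn_le)
  fix x assume x: "x \<in> K"
  have "\<bar>\<Sum>k. f k x\<bar> \<le> (\<Sum>k. \<bar>f k x\<bar>)"
    by (rule summable_rabs) (rule summable_of_supn(2)[OF c s x])
  also have "\<dots> \<le> (\<Sum>k. supn (f k))"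
    using summable_of_supn[OF c s x] s abs_le_supn[OF c x] by (intro suminf_le) auto
  finally show "\<bar>\<Sum>k. f k x\<bar> \<le> (\<Sum>k. supn (f k))" .
qed

lemma set_integral_suminf:
  fixes g :: "nat \<Rightarrow> 'a \<Rightarrow> real"
  assumes c: "\<And>k. continuous_on K (g k)" and s: "summable (\<lambda>k. supn (g k))"
  shows "(LINT y:\<Omega>|lborel. (\<Sum>k. g k y)) = (\<Sum>k. LINT y:\<Omega>|lborel. g k y)"
proof -
  define h where "h k y = indicator \<Omega> y *\<^sub>R g k y" for k y
  have h: "integrable lborel (h k)" for k
    using set_integrable_dom[OF c] unfolding h_def set_integrable_def .
  have h_le: "\<bar>h k y\<bar> \<le> supn (g k)" for k y
    using abs_le_supn[OF c] supn_nonneg[OF c] dom_subset_K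
    by (auto simp: h_def split: split_indicator)
  have "(LINT y|lborel. norm (h k y)) \<le> supn (g k) * measure lborel \<Omega>" for k
  proof -
    have "(LINT y|lborel. norm (h k y)) \<le> (LINT y|lborel. indicator \<Omega> y * supn (g k))"
    proof (rule integral_mono)
      show "integrable lborel (\<lambda>y. indicator \<Omega> y * supn (g k))"
        using set_integrable_dom[of "\<lambda>_. supn (g k)"] unfolding set_integrable_def by simp
      show "norm (h k y) \<le> indicator \<Omega> y * supn (g k)" for y
        using h_le[of k y] by (auto simp: h_def split: split_indicator)
    qed (use h in simp)
    then show ?thesis using emeasure_dom_finite by (simp add: mult.commute)
  qed
  then have "summable (\<lambda>k. LINT y|lborel. norm (h k y))"
    by (intro summable_comparison_test[OF _ summable_mult2[OF s]]) auto
  moreover have "summable (\<lambda>k. norm (h k y))" for y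
    by (rule summable_comparison_test[OF _ s]) (use h_le in auto)
  ultimately have "(LINT y|lborel. (\<Sum>k. h k y)) = (\<Sum>k. LINT y|lborel. h k y)"
    by (intro integral_suminf h) auto
  moreover have "(\<Sum>k. h k y) = indicator \<Omega> y * (\<Sum>k. g k y)" for y
    using suminf_mult[OF summable_of_supn(1)[OF c s, of y]] dom_subset_K
    by (auto simp: h_def split: split_indicator)
  ultimately show ?thesis unfolding set_lebesgue_integral_def h_def by simp
qed

lemma conv_suminf:
  fixes f :: "nat \<Rightarrow> 'a \<Rightarrow> real"
  assumes c: "\<And>k. continuous_on K (f k)" and s: "summable (\<lambda>k. supn (f k))"
  shows "conv (\<lambda>y. \<Sum>k. f k y) x = (\<Sum>k. conv (f k) x)"
proof -
  have Jc: "continuous_on K (\<lambda>y. J (x - y))"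
    by (rule continuous_on_compose2[OF continuous_J]) (auto intro!: continuous_intros)
  have "supn (\<lambda>y. J (x - y) * f k y) \<le> supn (\<lambda>y. J (x - y)) * supn (f k)" for k
    using abs_le_supn[OF Jc] abs_le_supn[OF c] supn_nonneg[OF Jc]
    by (intro supn_le) (auto simp: abs_mult intro!: mult_mono)
  then have "summable (\<lambda>k. supn (\<lambda>y. J (x - y) * f k y))"
    using continuous_on_mult[OF Jc c] supn_nonneg
    by (intro summable_comparison_test[OF _ summable_mult[OF s]]) auto
  then have "(LINT y:\<Omega>|lborel. (\<Sum>k. J (x - y) * f k y)) = (\<Sum>k. conv (f k) x)"
    unfolding conv_def using Jc c by (intro set_integral_suminf continuous_intros) auto
  moreover have "(\<Sum>k. J (x - y) * f k y) = J (x - y) * (\<Sum>k. f k y)" if "y \<in> \<Omega>" for y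
    using suminf_mult[OF summable_of_supn(1)[OF c s]] that dom_subset_K by auto
  ultimately show ?thesis unfolding conv_def
    by (metis (no_types, lifting) set_lebesgue_integral_cong dom_sets)
qed

lemma nonlocal_op_suminf:
  fixes f :: "nat \<Rightarrow> 'a \<Rightarrow> real"
  assumes c: "\<And>k. continuous_on K (f k)" and s: "summable (\<lambda>k. supn (f k))" and x: "x \<in> K"
  shows "nonlocal_op a p (\<lambda>y. \<Sum>k. f k y) x = (\<Sum>k. nonlocal_op a p (f k) x)"
proof -
  have s1: "summable (\<lambda>k. conv (f k) x)"
    by (rule summable_rabs_cancel, rule summable_comparison_test[OF _ s])
       (use abs_conv_le[OF c] in auto)
  have "(\<lambda>k. nonlocal_op a p (f k) x) sums (a * (\<Sum>k. conv (f k) x) + p x * (\<Sum>k. f k x))"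
    unfolding nonlocal_op_def
    by (intro sums_add sums_mult summable_sums s1 summable_of_supn[OF c s x])
  then show ?thesis unfolding nonlocal_op_def conv_suminf[OF c s] by (simp add: sums_iff)
qed

end

section \<open>Comparison principle and exponential decay\<close>

context nonlocal_domain
begin

text \<open>At a positive maximum \<open>(x\<^sub>1, t\<^sub>1)\<close> of \<open>u\<close> on \<open>K \<times> [0, Tm]\<close> we have \<open>t\<^sub>1 > 0\<close>, \<open>conv u \<le> u\<close> and
  hence \<open>\<partial>\<^sub>t u < 0\<close>, so \<open>u\<close> was larger slightly before \<open>t\<^sub>1\<close>.\<close>

lemma comparison_principle_dissipative:
  fixes u E c :: "'a \<Rightarrow> real \<Rightarrow> real"
  assumes cont: "continuous_on (K \<times> {0..Tm}) (\<lambda>(x, t). u x t)"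
    and init: "\<And>x. x \<in> K \<Longrightarrow> u x 0 \<le> 0"
    and deriv: "\<And>x t. x \<in> K \<Longrightarrow> 0 < t \<Longrightarrow> t \<le> Tm \<Longrightarrow> (u x has_real_derivative E x t) (at t)"
    and ineq: "\<And>x t. x \<in> K \<Longrightarrow> 0 < t \<Longrightarrow> t \<le> Tm \<Longrightarrow> E x t \<le> a * conv (\<lambda>y. u y t) x + c x t * u x t"
    and a: "0 \<le> a" and c: "\<And>x t. x \<in> K \<Longrightarrow> 0 < t \<Longrightarrow> t \<le> Tm \<Longrightarrow> c x t \<le> - (a + 1)"
    and x: "x \<in> K" and t: "0 \<le> t" "t \<le> Tm"
  shows "u x t \<le> 0"
proof (rule ccontr)
  assume pos: "\<not> u x t \<le> 0"
  define Q where "Q = K \<times> {0..Tm}"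
  have "compact Q" unfolding Q_def by (intro compact_Times compact_K compact_Icc)
  moreover have "Q \<noteq> {}" unfolding Q_def using x t by auto
  moreover have "continuous_on Q (\<lambda>(y, s). u y s)" unfolding Q_def by (rule cont)
  ultimately obtain z where "z \<in> Q" and zmax: "\<And>q. q \<in> Q \<Longrightarrow> (\<lambda>(y, s). u y s) q \<le> (\<lambda>(y, s). u y s) z"
    using continuous_attains_sup by metis
  obtain x1 t1 where z: "z = (x1, t1)" by (cases z)
  have x1: "x1 \<in> K" and t1: "0 \<le> t1" "t1 \<le> Tm" using \<open>z \<in> Q\<close> unfolding z Q_def by auto
  have max: "u y s \<le> u x1 t1" if "y \<in> K" "0 \<le> s" "s \<le> Tm" for y s
    using zmax[of "(y, s)"] that unfolding z Q_def by auto
  have M: "0 < u x1 t1" using max[OF x t] pos by simp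
  have t1pos: "0 < t1" using M init[OF x1] t1(1) by (cases "t1 = 0") auto
  have "conv (\<lambda>y. u y t1) x1 \<le> u x1 t1"
  proof (rule conv_le_const)
    show "continuous_on K (\<lambda>y. u y t1)" using continuous_on_fix_snd[OF cont] t1 by simp
  qed (use max t1 M dom_subset_K in auto)
  then have "E x1 t1 \<le> a * u x1 t1 + c x1 t1 * u x1 t1"
    using ineq[OF x1 t1pos t1(2)] mult_left_mono[OF _ a] by fastforce
  also have "\<dots> \<le> a * u x1 t1 - (a + 1) * u x1 t1"
    using mult_right_mono[OF c[OF x1 t1pos t1(2)] less_imp_le[OF M]] by (simp add: algebra_simps)
  finally have "E x1 t1 < 0" using M by (simp add: algebra_simps)
  then obtain d where d: "0 < d" "\<And>h. 0 < h \<Longrightarrow> h < d \<Longrightarrow> u x1 t1 < u x1 (t1 - h)"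
    using DERIV_neg_dec_left[OF deriv[OF x1 t1pos t1(2)]] by blast
  define h where "h = min (d / 2) t1"
  have "0 < h" "h < d" "h \<le> t1" unfolding h_def using d(1) t1pos by auto
  then show False using d(2)[of h] max[OF x1, of "t1 - h"] t1 by auto
qed

text \<open>The weight \<open>exp (- k t)\<close> with \<open>k = a + \<bar>B\<bar> + 1\<close> makes the inequality dissipative.\<close>

lemma comparison_principle:
  fixes v D b :: "'a \<Rightarrow> real \<Rightarrow> real"
  assumes cont: "continuous_on (K \<times> {0..Tm}) (\<lambda>(x, t). v x t)"
    and init: "\<And>x. x \<in> K \<Longrightarrow> v x 0 \<le> 0"
    and deriv: "\<And>x t. x \<in> K \<Longrightarrow> 0 < t \<Longrightarrow> t \<le> Tm \<Longrightarrow> (v x has_real_derivative D x t) (at t)"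
    and ineq: "\<And>x t. x \<in> K \<Longrightarrow> 0 < t \<Longrightarrow> t \<le> Tm \<Longrightarrow> D x t \<le> a * conv (\<lambda>y. v y t) x + b x t * v x t"
    and a: "0 \<le> a" and b: "\<And>x t. x \<in> K \<Longrightarrow> 0 < t \<Longrightarrow> t \<le> Tm \<Longrightarrow> \<bar>b x t\<bar> \<le> B"
    and x: "x \<in> K" and t: "0 \<le> t" "t \<le> Tm"
  shows "v x t \<le> 0"
proof -
  define k where "k = a + \<bar>B\<bar> + 1"
  have "exp (- k * t) * v x t \<le> 0"
  proof (rule comparison_principle_dissipative[where u="\<lambda>x t. exp (- k * t) * v x t"
        and c="\<lambda>x t. b x t - k"])
    show "continuous_on (K \<times> {0..Tm}) (\<lambda>(x, t). exp (- k * t) * v x t)"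
      using cont by (auto simp: case_prod_unfold intro!: continuous_intros)
    show "((\<lambda>s. exp (- k * s) * v y s) has_real_derivative
        exp (- k * s) * (D y s - k * v y s)) (at s)" if "y \<in> K" "0 < s" "s \<le> Tm" for y s
    proof -
      have "((\<lambda>s. exp (- k * s)) has_real_derivative exp (- k * s) * (- k)) (at s)"
        by (rule derivative_eq_intros refl | simp)+
      from DERIV_mult[OF this deriv[OF that]] show ?thesis by (simp add: algebra_simps)
    qed
    show "exp (- k * s) * (D y s - k * v y s)
        \<le> a * conv (\<lambda>y. exp (- k * s) * v y s) y + (b y s - k) * (exp (- k * s) * v y s)"
      if "y \<in> K" "0 < s" "s \<le> Tm" for y s
      using mult_left_mono[OF ineq[OF that], of "exp (- k * s)"]
      unfolding conv_scale by (simp add: algebra_simps)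
    show "b y s - k \<le> - (a + 1)" if "y \<in> K" "0 < s" "s \<le> Tm" for y s
      using b[OF that] unfolding k_def by simp
  qed (use init a x t in auto)
  then show ?thesis by (simp add: mult_le_0_iff)
qed

lemma integral_form_on_closure:
  fixes f D :: "'a \<Rightarrow> real \<Rightarrow> real"
  assumes fc: "continuous_on (K \<times> {0..}) (\<lambda>(x, t). f x t)"
    and Dc: "continuous_on (K \<times> {0..s}) (\<lambda>(x, t). D x t)"
    and der: "\<And>x t. x \<in> \<Omega> \<Longrightarrow> 0 < t \<Longrightarrow> (f x has_real_derivative D x t) (at t)"
    and x: "x \<in> K" and s: "0 \<le> s"
  shows "f x s = f x 0 + integral {0..s} (D x)"
proof -
  have "f x s - f x 0 - integral {0..s} (D x) = 0"
  proof (rule continuous_constant_on_closure[OF _ _ x])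
    have "continuous_on K (\<lambda>y. integral (cbox 0 s) (D y))"
      by (rule integral_continuous_on_param) (use Dc in simp)
    then show "continuous_on K (\<lambda>y. f y s - f y 0 - integral {0..s} (D y))"
      using continuous_on_fix_snd[OF fc, of s] continuous_on_fix_snd[OF fc, of 0] s
      by (auto intro!: continuous_intros)
    fix y assume y: "y \<in> \<Omega>"
    have "(D y has_integral (f y s - f y 0)) {0..s}"
    proof (rule fundamental_theorem_of_calculus_interior[OF s])
      have "continuous_on {0..} (f y)" using continuous_on_fix_fst[OF fc] y dom_subset_K by auto
      then show "continuous_on {0..s} (f y)" by (rule continuous_on_subset) auto
      show "(f y has_vector_derivative D y r) (at r)" if "r \<in> {0<..<s}" for r
        using der[OF y] that by (simp add: has_real_derivative_iff_has_vector_derivative)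
    qed
    then show "f y s - f y 0 - integral {0..s} (D y) = 0" by (simp add: integral_unique)
  qed
  then show ?thesis by simp
qed

lemma has_real_derivative_on_closure:
  fixes f D :: "'a \<Rightarrow> real \<Rightarrow> real"
  assumes fc: "continuous_on (K \<times> {0..}) (\<lambda>(x, t). f x t)"
    and Dc: "\<And>Tm. continuous_on (K \<times> {0..Tm}) (\<lambda>(x, t). D x t)"
    and der: "\<And>x t. x \<in> \<Omega> \<Longrightarrow> 0 < t \<Longrightarrow> (f x has_real_derivative D x t) (at t)"
    and x: "x \<in> K" and t: "0 < t"
  shows "(f x has_real_derivative D x t) (at t)"
proof -
  define G where "G s = f x 0 + integral {0..s} (D x)" for s
  have "continuous_on {0..t+1} (D x)"
    using continuous_on_fix_fst[OF Dc x] .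
  then have "((\<lambda>u. integral {0..u} (D x)) has_vector_derivative D x t) (at t within {0..t+1})"
    by (rule integral_has_vector_derivative) (use t in auto)
  then have "(G has_vector_derivative D x t) (at t within {0..t+1})"
    using has_vector_derivative_add[OF has_vector_derivative_const[of "f x 0"]] unfolding G_def
    by auto
  moreover have "at t within {0..t+1} = at t" by (rule at_within_Icc_at) (use t in auto)
  ultimately have "(G has_real_derivative D x t) (at t)"
    by (simp add: has_real_derivative_iff_has_vector_derivative)
  then show ?thesis
  proof (rule has_field_derivative_transform_within_open[where S="{0<..<t+1}"])
    show "G s = f x s" if "s \<in> {0<..<t+1}" for s
      using integral_form_on_closure[OF fc Dc der x, of s] that unfolding G_def by simp
  qed (use t in auto)
qed

lemma nonlocal_equation_on_closure:
  fixes u g :: "'a \<Rightarrow> real \<Rightarrow> real"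
  assumes u: "continuous_on (K \<times> {0..}) (\<lambda>(x, t). u x t)"
    and g: "continuous_on (K \<times> {0..}) (\<lambda>(x, t). g x t)"
    and der: "\<And>x t. x \<in> \<Omega> \<Longrightarrow> 0 < t \<Longrightarrow> (u x has_real_derivative
      d * (LINT y|lborel. J (x - y) * (indicator \<Omega> y * u y t - u x t)) + g x t) (at t)"
    and x: "x \<in> K" and t: "0 < t"
  shows "(u x has_real_derivative d * (conv (\<lambda>y. u y t) x - u x t) + g x t) (at t)"
proof (rule has_real_derivative_on_closure[OF u _ _ x t])
  show "continuous_on (K \<times> {0..Tm}) (\<lambda>(x, t). d * (conv (\<lambda>y. u y t) x - u x t) + g x t)" for Tm
  proof -
    have "continuous_on (K \<times> {0..Tm}) (\<lambda>(x, t). u x t)" "continuous_on (K \<times> {0..Tm}) (\<lambda>(x, t). g x t)"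
      by (auto intro: continuous_on_subset[OF u] continuous_on_subset[OF g])
    with continuous_on_conv_param[OF this(1)] show ?thesis
      by (auto simp: case_prod_unfold intro!: continuous_intros)
  qed
  show "(u y has_real_derivative d * (conv (\<lambda>y. u y s) y - u y s) + g y s) (at s)"
    if "y \<in> \<Omega>" "0 < s" for y s
    using der[OF that] conv_lborel[OF continuous_on_fix_snd[OF u], of s y] that by simp
qed

lemma le_exp_multiple_of_supersolution:
  fixes v D :: "'a \<Rightarrow> real \<Rightarrow> real" and w b :: "'a \<Rightarrow> real"
  assumes a: "0 \<le> a" and b: "\<And>x. x \<in> K \<Longrightarrow> \<bar>b x\<bar> \<le> B"
    and w: "continuous_on K w" and super: "\<And>x. x \<in> K \<Longrightarrow> a * conv w x + b x * w x \<le> - m"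
    and cont: "\<And>Tm. continuous_on (K \<times> {0..Tm}) (\<lambda>(x, t). v x t)"
    and deriv: "\<And>x t. x \<in> K \<Longrightarrow> 0 < t \<Longrightarrow> (v x has_real_derivative D x t) (at t)"
    and ineq: "\<And>x t. x \<in> K \<Longrightarrow> 0 < t \<Longrightarrow>
      D x t \<le> a * conv (\<lambda>y. v y t) x + b x * v x t + C * exp (- \<epsilon> * t)"
    and C: "0 \<le> C" and k: "0 \<le> k" "C \<le> k * m / 2" and \<delta>: "\<delta> \<le> \<epsilon>" "\<And>x. x \<in> K \<Longrightarrow> \<delta> * w x \<le> m / 2"
    and init: "\<And>x. x \<in> K \<Longrightarrow> v x 0 \<le> k * w x"
    and x: "x \<in> K" and t: "0 \<le> t"
  shows "v x t \<le> k * exp (- \<delta> * t) * w x"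
proof -
  have "v x t - k * exp (- \<delta> * t) * w x \<le> 0"
  proof (rule comparison_principle[where v="\<lambda>x t. v x t - k * exp (- \<delta> * t) * w x"
        and D="\<lambda>x t. D x t + \<delta> * (k * exp (- \<delta> * t)) * w x" and b="\<lambda>x t. b x" and Tm=t])
    show "continuous_on (K \<times> {0..t}) (\<lambda>(x, t). v x t - k * exp (- \<delta> * t) * w x)"
      using cont[of t] continuous_on_comp_fst[OF w]
      by (auto simp: case_prod_unfold intro!: continuous_intros)
    show "((\<lambda>s. v y s - k * exp (- \<delta> * s) * w y) has_real_derivative
        D y s + \<delta> * (k * exp (- \<delta> * s)) * w y) (at s)" if "y \<in> K" "0 < s" "s \<le> t" for y s
    proof -
      have "((\<lambda>s. k * exp (- \<delta> * s) * w y) has_real_derivative k * (exp (- \<delta> * s) * (- \<delta>)) * w y) (at s)"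
        by (rule derivative_eq_intros refl | simp)+
      from DERIV_diff[OF deriv[OF that(1,2)] this] show ?thesis by (simp add: algebra_simps)
    qed
    show "D y s + \<delta> * (k * exp (- \<delta> * s)) * w y
        \<le> a * conv (\<lambda>y. v y s - k * exp (- \<delta> * s) * w y) y + b y * (v y s - k * exp (- \<delta> * s) * w y)"
      if y: "y \<in> K" and s: "0 < s" "s \<le> t" for y s
    proof -
      define e where "e = k * exp (- \<delta> * s)"
      have e: "0 \<le> e" unfolding e_def using k by simp
      have "conv (\<lambda>z. v z s - e * w z) y = conv (\<lambda>z. v z s) y - e * conv w y"
        using conv_diff[OF continuous_on_fix_snd[OF cont[of s]] continuous_on_mult[OF continuous_on_const w]] s
        by (simp add: conv_scale)
      then have rhs: "a * conv (\<lambda>z. v z s - e * w z) y + b y * (v y s - e * w y)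
          = a * conv (\<lambda>z. v z s) y + b y * v y s - e * (a * conv w y + b y * w y)"
        by (simp add: algebra_simps flip: distrib_left)
      have "C * exp (- \<epsilon> * s) \<le> C * exp (- \<delta> * s)"
        using C \<delta>(1) s mult_right_mono[OF \<delta>(1), of s] by (intro mult_left_mono) auto
      also have "\<dots> \<le> k * m / 2 * exp (- \<delta> * s)" using k by (intro mult_right_mono) auto
      finally have forcing: "C * exp (- \<epsilon> * s) \<le> e * m / 2" unfolding e_def by (simp add: ac_simps)
      have "\<delta> * e * w y \<le> e * m / 2" using mult_left_mono[OF \<delta>(2)[OF y] e] by (simp add: ac_simps)
      moreover have "e * m \<le> - e * (a * conv w y + b y * w y)"
        using mult_left_mono[OF super[OF y] e] by simp
      ultimately show ?thesis
        using ineq[OF y s(1)] forcing unfolding rhs e_def[symmetric] by (simp add: algebra_simps)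
    qed
  qed (use init a b x t in auto)
  then show ?thesis by simp
qed

lemma exp_decay_by_strict_supersolution:
  fixes v D :: "'a \<Rightarrow> real \<Rightarrow> real" and w b :: "'a \<Rightarrow> real"
  assumes a: "0 \<le> a" and b: "\<And>x. x \<in> K \<Longrightarrow> \<bar>b x\<bar> \<le> B"
    and w: "continuous_on K w" "\<And>x. x \<in> K \<Longrightarrow> 0 < w x"
    and super: "\<And>x. x \<in> K \<Longrightarrow> a * conv w x + b x * w x \<le> - m" and m: "0 < m"
    and cont: "\<And>Tm. continuous_on (K \<times> {0..Tm}) (\<lambda>(x, t). v x t)"
    and deriv: "\<And>x t. x \<in> K \<Longrightarrow> 0 < t \<Longrightarrow> (v x has_real_derivative D x t) (at t)"
    and ineq: "\<And>x t. x \<in> K \<Longrightarrow> 0 < t \<Longrightarrow>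
      D x t \<le> a * conv (\<lambda>y. v y t) x + b x * v x t + C * exp (- \<epsilon> * t)"
    and C: "0 \<le> C" and \<epsilon>: "0 < \<epsilon>"
  obtains C' \<epsilon>' where "0 \<le> C'" "0 < \<epsilon>'"
    "\<And>x t. x \<in> K \<Longrightarrow> 0 \<le> t \<Longrightarrow> v x t \<le> C' * exp (- \<epsilon>' * t)"
proof -
  obtain w0 where w0: "0 < w0" "\<And>x. x \<in> K \<Longrightarrow> w0 \<le> w x"
    using pos_lower_bound_on_K[OF w] by blast
  have W: "w x \<le> supn w" if "x \<in> K" for x using abs_le_supn[OF w(1) that] by simp
  have "0 < supn w" using w(2) W K_nonempty by (meson ex_in_conv less_le_trans)
  define \<delta> where "\<delta> = min \<epsilon> (m / (2 * supn w))"
  define k where "k = supn (\<lambda>x. v x 0) / w0 + 2 * C / m"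
  have v0: "continuous_on K (\<lambda>x. v x 0)" using continuous_on_fix_snd[OF cont[of 0]] by simp
  have k: "0 \<le> k" "C \<le> k * m / 2"
    using supn_nonneg[OF v0] w0 C m by (auto simp: k_def field_simps)
  have \<delta>: "0 < \<delta>" "\<delta> \<le> \<epsilon>" "\<And>x. x \<in> K \<Longrightarrow> \<delta> * w x \<le> m / 2"
  proof -
    show "0 < \<delta>" "\<delta> \<le> \<epsilon>" unfolding \<delta>_def using \<epsilon> m \<open>0 < supn w\<close> by auto
    fix x assume "x \<in> K"
    then have "\<delta> * w x \<le> m / (2 * supn w) * supn w"
      using W[OF \<open>x \<in> K\<close>] w(2)[OF \<open>x \<in> K\<close>] m \<open>0 < \<delta>\<close> unfolding \<delta>_def by (intro mult_mono) auto
    then show "\<delta> * w x \<le> m / 2" using \<open>0 < supn w\<close> by simp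
  qed
  have init: "v x 0 \<le> k * w x" if "x \<in> K" for x
  proof -
    have "v x 0 \<le> supn (\<lambda>x. v x 0) / w0 * w0" using abs_le_supn[OF v0 that] w0 by simp
    also have "\<dots> \<le> k * w x"
      using w0 that supn_nonneg[OF v0] k C m by (intro mult_mono) (auto simp: k_def)
    finally show ?thesis .
  qed
  show thesis
  proof (rule that[OF _ \<delta>(1)])
    show "0 \<le> k * supn w" using k(1) supn_nonneg[OF w(1)] by simp
  next
    fix x and t :: real assume x: "x \<in> K" and t: "0 \<le> t"
    have "v x t \<le> k * exp (- \<delta> * t) * w x"
      by (rule le_exp_multiple_of_supersolution[OF a b w(1) super cont deriv ineq C k \<delta>(2,3) init x t])
    also have "\<dots> \<le> k * supn w * exp (- \<delta> * t)"
      using mult_right_mono[OF mult_left_mono[OF W[OF x] k(1)], of "exp (- \<delta> * t)"]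
      by (simp add: ac_simps)
    finally show "v x t \<le> k * supn w * exp (- \<delta> * t)" .
  qed
qed

lemma equilibrium_on_closure:
  assumes Sstar: "continuous_on K Sstar" and \<Lambda>: "continuous_on K \<Lambda>"
    and eq: "\<And>x. x \<in> \<Omega> \<Longrightarrow> d * (LINT y|lborel. J (x - y) * (indicator \<Omega> y * Sstar y - Sstar x)) + \<Lambda> x = 0"
    and x: "x \<in> K"
  shows "d * (conv Sstar x - Sstar x) + \<Lambda> x = 0"
proof (rule continuous_constant_on_closure[OF _ _ x])
  show "continuous_on K (\<lambda>x. d * (conv Sstar x - Sstar x) + \<Lambda> x)"
    by (intro continuous_intros continuous_on_conv Sstar \<Lambda>)
  show "d * (conv Sstar x - Sstar x) + \<Lambda> x = 0" if "x \<in> \<Omega>" for x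
    using eq[OF that] conv_lborel[OF Sstar, of x] by simp
qed

text \<open>The deviation \<open>U = S - S\<^sub>*\<close> solves \<open>U' = d\<^sub>S (conv U - U) + f\<close>, and the equilibrium \<open>S\<^sub>*\<close>
  is a strict supersolution of this equation because \<open>d\<^sub>S (conv S\<^sub>* - S\<^sub>*) = - \<Lambda> < 0\<close>.
  Both \<open>U\<close> and \<open>- U\<close> are therefore covered by \<open>exp_decay_by_strict_supersolution\<close>.\<close>

lemma deviation_exp_bound:
  fixes S f :: "'a \<Rightarrow> real \<Rightarrow> real" and \<Lambda> Sstar :: "'a \<Rightarrow> real"
  assumes dS: "0 < dS" and \<Lambda>: "\<And>x. x \<in> K \<Longrightarrow> \<Lambda>0 \<le> \<Lambda> x" "0 < \<Lambda>0"
    and Sstar: "continuous_on K Sstar" "\<And>x. x \<in> K \<Longrightarrow> 0 < Sstar x"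
      "\<And>x. x \<in> K \<Longrightarrow> dS * (conv Sstar x - Sstar x) + \<Lambda> x = 0"
    and cont: "continuous_on (K \<times> {0..}) (\<lambda>(x, t). S x t)"
    and deriv: "\<And>x t. x \<in> K \<Longrightarrow> 0 < t \<Longrightarrow>
      (S x has_real_derivative dS * (conv (\<lambda>y. S y t) x - S x t) + (\<Lambda> x + f x t)) (at t)"
    and f: "\<And>x t. x \<in> K \<Longrightarrow> 0 < t \<Longrightarrow> \<bar>f x t\<bar> \<le> C * exp (- \<epsilon> * t)" "0 \<le> C" "0 < \<epsilon>"
    and \<sigma>: "\<bar>\<sigma>\<bar> = 1"
  obtains C' \<epsilon>' where "0 \<le> C'" "0 < \<epsilon>'" "\<And>x t. x \<in> K \<Longrightarrow> 0 \<le> t \<Longrightarrow> \<sigma> * (S x t - Sstar x) \<le> C' * exp (- \<epsilon>' * t)"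
proof -
  have super: "dS * conv Sstar x + - dS * Sstar x \<le> - \<Lambda>0" if "x \<in> K" for x
    using Sstar(3)[OF that] \<Lambda>(1)[OF that] by (simp add: algebra_simps)
  have conv_dev: "conv (\<lambda>y. \<sigma> * (S y t - Sstar y)) x = \<sigma> * (conv (\<lambda>y. S y t) x - conv Sstar x)"
    if "0 \<le> t" for x t
    using conv_diff[OF continuous_on_fix_snd[OF cont] Sstar(1)] that by (simp add: conv_scale)
  show thesis
  proof (rule exp_decay_by_strict_supersolution[where b="\<lambda>_. - dS", OF _ _ Sstar(1,2) super \<Lambda>(2)])
    show "\<And>C' \<epsilon>'. 0 \<le> C' \<Longrightarrow> 0 < \<epsilon>' \<Longrightarrow> (\<And>x t. x \<in> K \<Longrightarrow> 0 \<le> t \<Longrightarrow>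
      \<sigma> * (S x t - Sstar x) \<le> C' * exp (- \<epsilon>' * t)) \<Longrightarrow> thesis"
      by (rule that)
    show "continuous_on (K \<times> {0..Tm}) (\<lambda>(x, t). \<sigma> * (S x t - Sstar x))" for Tm
    proof -
      have "continuous_on (K \<times> {0..Tm}) (\<lambda>(x, t). S x t)"
        by (rule continuous_on_subset[OF cont]) auto
      with continuous_on_comp_fst[OF Sstar(1)] show ?thesis
        by (auto simp: case_prod_unfold intro!: continuous_intros)
    qed
    show "((\<lambda>t. \<sigma> * (S x t - Sstar x)) has_real_derivative
        \<sigma> * (dS * (conv (\<lambda>y. S y t) x - S x t) + (\<Lambda> x + f x t))) (at t)" if "x \<in> K" "0 < t" for x t
      using deriv[OF that] by (auto intro!: derivative_eq_intros)
    show "\<sigma> * (dS * (conv (\<lambda>y. S y t) x - S x t) + (\<Lambda> x + f x t))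
        \<le> dS * conv (\<lambda>y. \<sigma> * (S y t - Sstar y)) x + - dS * (\<sigma> * (S x t - Sstar x)) + C * exp (- \<epsilon> * t)"
      if "x \<in> K" "0 < t" for x t
    proof -
      have "\<sigma> * f x t \<le> C * exp (- \<epsilon> * t)"
        using f(1)[OF that] \<sigma> abs_mult[of \<sigma> "f x t"] abs_ge_self[of "\<sigma> * f x t"] by simp
      moreover have \<Lambda>_eq: "\<Lambda> x = dS * (Sstar x - conv Sstar x)"
        using Sstar(3)[OF that(1)] by (simp add: algebra_simps)
      ultimately show ?thesis unfolding \<Lambda>_eq conv_dev[OF less_imp_le[OF that(2)]]
        by (simp add: algebra_simps)
    qed
  qed (use dS f in auto)
qed

lemma susceptible_uniform_convergence:
  fixes S f :: "'a \<Rightarrow> real \<Rightarrow> real" and \<Lambda> Sstar :: "'a \<Rightarrow> real"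
  assumes dS: "0 < dS" and \<Lambda>: "continuous_on K \<Lambda>" "\<And>x. x \<in> K \<Longrightarrow> 0 < \<Lambda> x"
    and Sstar: "continuous_on K Sstar" "\<And>x. x \<in> K \<Longrightarrow> 0 < Sstar x"
      "\<And>x. x \<in> \<Omega> \<Longrightarrow> dS * (LINT y|lborel. J (x - y) * (indicator \<Omega> y * Sstar y - Sstar x)) + \<Lambda> x = 0"
    and cont: "continuous_on (K \<times> {0..}) (\<lambda>(x, t). S x t)"
    and deriv: "\<And>x t. x \<in> K \<Longrightarrow> 0 < t \<Longrightarrow>
      (S x has_real_derivative dS * (conv (\<lambda>y. S y t) x - S x t) + (\<Lambda> x + f x t)) (at t)"
    and f: "\<And>x t. x \<in> K \<Longrightarrow> 0 < t \<Longrightarrow> \<bar>f x t\<bar> \<le> C * exp (- \<epsilon> * t)" "0 \<le> C" "0 < \<epsilon>"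
  shows "uniform_limit K (\<lambda>t x. S x t) Sstar at_top"
proof -
  obtain \<Lambda>0 where \<Lambda>0: "0 < \<Lambda>0" "\<forall>x\<in>K. \<Lambda>0 \<le> \<Lambda> x" using pos_lower_bound_on_K[OF \<Lambda>] by blast
  note bound = deviation_exp_bound[OF dS _ \<Lambda>0(1) Sstar(1,2) equilibrium_on_closure[OF Sstar(1) \<Lambda>(1) Sstar(3)]
      cont deriv f]
  obtain Cu \<epsilon>u Cl \<epsilon>l where "0 < \<epsilon>u" "\<And>x t. x \<in> K \<Longrightarrow> 0 \<le> t \<Longrightarrow> S x t - Sstar x \<le> Cu * exp (- \<epsilon>u * t)"
    and "0 < \<epsilon>l" "\<And>x t. x \<in> K \<Longrightarrow> 0 \<le> t \<Longrightarrow> - (S x t - Sstar x) \<le> Cl * exp (- \<epsilon>l * t)"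
    using bound[of 1] bound[of "-1"] \<Lambda>0(2) by (metis abs_minus_cancel abs_one mult_1 mult_minus1)
  then show ?thesis
    by (intro uniform_limit_exp_squeeze[where C=Cu and \<epsilon>=\<epsilon>u and C'=Cl and \<epsilon>'=\<epsilon>l]) auto
qed

end

section \<open>The semigroup of the linearised infection equation\<close>

locale dispersal_semigroup = nonlocal_domain +
  fixes dI :: real and \<gamma> :: "'a \<Rightarrow> real"
  assumes dI_pos: "0 < dI" and \<gamma>_cont: "continuous_on K \<gamma>" and \<gamma>_pos: "\<And>x. x \<in> K \<Longrightarrow> 0 < \<gamma> x"
begin

definition "\<gamma>min = (INF x\<in>K. \<gamma> x)"

definition "\<gamma>max = supn \<gamma>"

definition "potA = (\<lambda>x. - dI - \<gamma> x)"

abbreviation "A \<equiv> nlA \<Omega> J dI \<gamma>"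

abbreviation "T \<equiv> nlT \<Omega> J dI \<gamma>"

definition "qA = 2 * dI + \<gamma>max"

lemma \<gamma>min_bounds: "0 < \<gamma>min" "\<And>x. x \<in> K \<Longrightarrow> \<gamma>min \<le> \<gamma> x"
proof -
  obtain x0 where x0: "x0 \<in> K" "\<And>y. y \<in> K \<Longrightarrow> \<gamma> x0 \<le> \<gamma> y"
    using continuous_attains_inf[OF compact_K K_nonempty \<gamma>_cont] by blast
  have "\<gamma>min = \<gamma> x0" unfolding \<gamma>min_def
    by (rule antisym) (auto intro!: cINF_lower2[OF _ x0(1)] cINF_greatest K_nonempty x0(2) bdd_belowI2[of _ "\<gamma> x0"])
  then show "0 < \<gamma>min" using \<gamma>_pos[OF x0(1)] by simp
  show "\<gamma>min \<le> \<gamma> x" if "x \<in> K" for x using \<open>\<gamma>min = \<gamma> x0\<close> x0(2)[OF that] by simp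
qed

lemma \<gamma>max_bounds: "\<And>x. x \<in> K \<Longrightarrow> \<gamma> x \<le> \<gamma>max" "\<gamma>min \<le> \<gamma>max"
proof -
  show "\<gamma> x \<le> \<gamma>max" if "x \<in> K" for x using abs_le_supn[OF \<gamma>_cont that] unfolding \<gamma>max_def by simp
  obtain x where "x \<in> K" using K_nonempty by (meson ex_in_conv)
  then show "\<gamma>min \<le> \<gamma>max"
    using \<gamma>min_bounds(2)[of x] abs_le_supn[OF \<gamma>_cont \<open>x \<in> K\<close>] unfolding \<gamma>max_def
    by simp
qed

lemma continuous_on_potA: "continuous_on K potA"
  unfolding potA_def[abs_def]
  by (intro continuous_intros \<gamma>_cont)

lemma abs_potA_le: "x \<in> K \<Longrightarrow> \<bar>potA x\<bar> \<le> dI + \<gamma>max"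
  unfolding potA_def using \<gamma>_pos[of x] \<gamma>max_bounds(1)[of x] dI_pos by simp

lemma qA_pos: "0 < qA"
  unfolding qA_def using dI_pos \<gamma>min_bounds \<gamma>max_bounds by auto

lemma A_eq: "A = nonlocal_op dI potA"
  unfolding nlA_def[abs_def] nonlocal_op_def[abs_def] conv_def potA_def
  by (auto simp: algebra_simps)

lemma T_series: "T t \<phi> x = (\<Sum>k. t ^ k / fact k * (A ^^ k) \<phi> x)"
  unfolding nlT_def ..

lemma continuous_on_A_pow: "continuous_on K u \<Longrightarrow> continuous_on K ((A ^^ k) u)"
  unfolding A_eq by (rule continuous_on_nonlocal_op_pow[OF continuous_on_potA])

lemma supn_A_pow_le:
  assumes u: "continuous_on K u"
  shows "supn ((A ^^ k) u) \<le> qA ^ k * supn u"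
  using supn_nonlocal_op_pow_le[OF continuous_on_potA u abs_potA_le, where a=dI and k=k] dI_pos
  unfolding A_eq qA_def by (simp add: algebra_simps)

lemma abs_A_pow_le: "continuous_on K u \<Longrightarrow> x \<in> K \<Longrightarrow> \<bar>(A ^^ k) u x\<bar> \<le> qA ^ k * supn u"
  using abs_le_supn[OF continuous_on_A_pow] supn_A_pow_le by (meson order_trans)

lemma abs_T_term_le:
  assumes u: "continuous_on K u" and x: "x \<in> K"
  shows "\<bar>t ^ k / fact k * (A ^^ k) u x\<bar> \<le> (\<bar>t\<bar> * qA) ^ k / fact k * supn u"
proof -
  have "\<bar>t ^ k / fact k * (A ^^ k) u x\<bar> = \<bar>t\<bar> ^ k / fact k * \<bar>(A ^^ k) u x\<bar>"
    by (simp add: abs_mult power_abs)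
  also have "\<dots> \<le> \<bar>t\<bar> ^ k / fact k * (qA ^ k * supn u)"
    by (intro mult_left_mono abs_A_pow_le u x) auto
  finally show ?thesis by (simp add: power_mult_distrib)
qed

lemma summable_supn_T_terms:
  assumes u: "continuous_on K u"
  shows "summable (\<lambda>k. supn (\<lambda>y. t ^ k / fact k * (A ^^ k) u y))"
proof (rule summable_comparison_test[OF _ summable_exp_series_mult[of "\<bar>t\<bar> * qA" "supn u"]])
  show "\<exists>N. \<forall>n\<ge>N. norm (supn (\<lambda>y. t ^ n / fact n * (A ^^ n) u y)) \<le> (\<bar>t\<bar> * qA) ^ n / fact n * supn u"
  proof (intro exI allI impI)
    fix n
    have c: "continuous_on K (\<lambda>y. t ^ n / fact n * (A ^^ n) u y)"
      by (intro continuous_intros continuous_on_A_pow u)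
    have "supn (\<lambda>y. t ^ n / fact n * (A ^^ n) u y) \<le> (\<bar>t\<bar> * qA) ^ n / fact n * supn u"
      by (rule supn_le) (rule abs_T_term_le[OF u])
    then show "norm (supn (\<lambda>y. t ^ n / fact n * (A ^^ n) u y)) \<le> (\<bar>t\<bar> * qA) ^ n / fact n * supn u"
      using supn_nonneg[OF c] by simp
  qed
qed

lemma continuous_on_T_term: "continuous_on K u \<Longrightarrow> continuous_on K (\<lambda>y. t ^ k / fact k * (A ^^ k) u y)"
  by (intro continuous_intros continuous_on_A_pow)

lemma continuous_on_T: "continuous_on K u \<Longrightarrow> continuous_on K (T t u)"
  unfolding T_series[abs_def]
  by (rule continuous_on_suminf_supn[OF continuous_on_T_term summable_supn_T_terms])

lemma summable_T_series: "continuous_on K u \<Longrightarrow> x \<in> K \<Longrightarrow> summable (\<lambda>k. t ^ k / fact k * (A ^^ k) u x)"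
  by (rule summable_of_supn(1)[OF continuous_on_T_term summable_supn_T_terms])

lemma T_cong:
  assumes "\<And>y. y \<in> K \<Longrightarrow> u y = v y" "x \<in> K"
  shows "T t u x = T t v x"
proof -
  have "\<And>k. (nonlocal_op dI potA ^^ k) u x = (nonlocal_op dI potA ^^ k) v x"
    using nonlocal_op_pow_cong assms
    by blast
  then show ?thesis unfolding T_series A_eq by simp
qed

lemma T_scale:
  assumes "continuous_on K u" "x \<in> K"
  shows "T t (\<lambda>y. c * u y) x = c * T t u x"
proof -
  define X where "X k = (A ^^ k) u x" for k
  have "T t (\<lambda>y. c * u y) x = (\<Sum>k. c * (t ^ k / fact k * X k))"
    unfolding T_series A_eq nonlocal_op_pow_scale X_def by (simp add: algebra_simps)
  also have "\<dots> = c * (\<Sum>k. t ^ k / fact k * X k)"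
    by (rule suminf_mult) (unfold X_def, rule summable_T_series[OF assms])
  finally show ?thesis unfolding T_series X_def .
qed

lemma T_zero: "T 0 u x = u x"
proof -
  have "T 0 u x = (\<Sum>k. (A ^^ k) u x / fact k * 0 ^ k)" unfolding T_series
    by (simp add: mult.commute)
  also have "\<dots> = u x" by (subst powser_zero) simp
  finally show ?thesis .
qed

lemma continuous_on_T_joint:
  assumes u: "continuous_on K u"
  shows "continuous_on (K \<times> {0..Tm}) (\<lambda>(x, t). T t u x)"
proof -
  have "continuous_on (K \<times> {0..Tm}) (\<lambda>z. \<Sum>k. snd z ^ k / fact k * (A ^^ k) u (fst z))"
  proof (rule continuous_on_suminf_Weierstrass)
    show "continuous_on (K \<times> {0..Tm}) (\<lambda>z. snd z ^ k / fact k * (A ^^ k) u (fst z))" for k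
      by (intro continuous_intros continuous_on_compose2[OF continuous_on_A_pow[OF u]]) auto
    show "\<bar>snd z ^ k / fact k * (A ^^ k) u (fst z)\<bar> \<le> (\<bar>Tm\<bar> * qA) ^ k / fact k * supn u"
      if "z \<in> K \<times> {0..Tm}" for k z
    proof -
      have "\<bar>snd z ^ k / fact k * (A ^^ k) u (fst z)\<bar> \<le> (\<bar>snd z\<bar> * qA) ^ k / fact k * supn u"
        by (rule abs_T_term_le[OF u]) (use that in auto)
      also have "\<dots> \<le> (\<bar>Tm\<bar> * qA) ^ k / fact k * supn u"
        using that qA_pos supn_nonneg[OF u]
        by (intro mult_right_mono divide_right_mono power_mono) auto
      finally show ?thesis .
    qed
  qed (rule summable_exp_series_mult)
  then show ?thesis unfolding T_series by (simp add: case_prod_unfold)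
qed

lemma T_has_real_derivative:
  assumes u: "continuous_on K u" and x: "x \<in> K"
  shows "((\<lambda>t. T t u x) has_real_derivative T t (A u) x) (at t)"
proof -
  define c where "c n = (A ^^ n) u x / fact n" for n
  have eq: "T s u x = (\<Sum>n. c n * s ^ n)" for s unfolding T_series c_def by (simp add: algebra_simps)
  have "summable (\<lambda>n. c n * y ^ n)" for y
    using summable_T_series[OF u x, of y] unfolding c_def by (simp add: algebra_simps)
  from termdiffs_strong_converges_everywhere[OF this]
  have "((\<lambda>s. \<Sum>n. c n * s ^ n) has_real_derivative (\<Sum>n. diffs c n * t ^ n)) (at t)" .
  moreover have "diffs c n * t ^ n = t ^ n / fact n * (A ^^ n) (A u) x" for n
  proof -
    have "a * (X / (a * b)) = X / b" if "a \<noteq> 0" for a b X :: real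
      using that by (cases "b = 0") (simp_all add: field_simps)
    then have "of_nat (Suc n) * (X / fact (Suc n)) = X / fact n" for X :: real
      by (subst fact_Suc) simp
    then show ?thesis unfolding diffs_def c_def by (simp add: funpow_swap1)
  qed
  ultimately show ?thesis unfolding eq T_series[of _ "A u"] by simp
qed

lemma A_T_commute:
  assumes u: "continuous_on K u" and x: "x \<in> K"
  shows "A (T t u) x = T t (A u) x"
proof -
  have "A (T t u) x = (\<Sum>k. A (\<lambda>y. t ^ k / fact k * (A ^^ k) u y) x)"
    unfolding T_series[abs_def] A_eq
    by (rule nonlocal_op_suminf[OF continuous_on_T_term[OF u, unfolded A_eq] summable_supn_T_terms[OF u, unfolded A_eq] x])
  also have "\<dots> = (\<Sum>k. t ^ k / fact k * (A ^^ k) (A u) x)"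
    unfolding A_eq nonlocal_op_scale by (simp add: funpow_swap1)
  finally show ?thesis unfolding T_series .
qed

lemma T_le_exp:
  assumes u: "continuous_on K u" and x: "x \<in> K" and t: "0 \<le> t"
  shows "T t u x \<le> supn u * exp (- (\<gamma>min / 2) * t)"
proof -
  have "T t u x \<le> supn u * exp (- (\<gamma>min / 2) * t) * 1"
  proof (rule le_exp_multiple_of_supersolution[where w="\<lambda>_. 1" and m=\<gamma>min and C=0 and \<epsilon>=\<gamma>min,
        OF _ abs_potA_le _ _ continuous_on_T_joint[OF u] T_has_real_derivative[OF u]])
    show "dI * conv (\<lambda>_. 1) y + potA y * 1 \<le> - \<gamma>min" if "y \<in> K" for y
      using mult_left_le[OF dom_mass_bounds(2)[of y] less_imp_le[OF dI_pos]] \<gamma>min_bounds(2)[OF that]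
      unfolding conv_const potA_def by simp
    show "T s (A u) y \<le> dI * conv (\<lambda>y. T s u y) y + potA y * T s u y + 0 * exp (- \<gamma>min * s)"
      if "y \<in> K" for y s
      using A_T_commute[OF u that, of s] unfolding A_eq nonlocal_op_def by simp
    show "T 0 u y \<le> supn u * 1" if "y \<in> K" for y
      using abs_le_supn[OF u that] by (simp add: T_zero)
  qed (use dI_pos x t \<gamma>min_bounds supn_nonneg[OF u] in auto)
  then show ?thesis by simp
qed

lemma abs_T_le_exp:
  assumes u: "continuous_on K u" and x: "x \<in> K" and t: "0 \<le> t"
  shows "\<bar>T t u x\<bar> \<le> supn u * exp (- (\<gamma>min / 2) * t)"
proof -
  have "T t (\<lambda>y. - u y) x \<le> supn (\<lambda>y. - u y) * exp (- (\<gamma>min / 2) * t)"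
    by (rule T_le_exp[OF _ x t]) (intro continuous_intros u)
  moreover have "T t (\<lambda>y. - u y) x = - T t u x" using T_scale[OF u x, of t "-1"] by simp
  ultimately show ?thesis using T_le_exp[OF u x t] unfolding supn_uminus by linarith
qed

text \<open>\<open>A = M - cM\<close> with a positive operator \<open>M\<close> of norm at most \<open>qM < cM\<close>, so \<open>(- A)\<^sup>-\<^sup>1\<close> is
  the Neumann series \<open>G = \<Sum>k. M\<^sup>k / cM\<^sup>k\<^sup>+\<^sup>1\<close>.\<close>

definition "potM = (\<lambda>x. \<gamma>max - \<gamma> x)"

definition "M = nonlocal_op dI potM"

definition "cM = dI + \<gamma>max"

definition "qM = dI + \<gamma>max - \<gamma>min"

definition "G u x = (\<Sum>k. (M ^^ k) u x / cM ^ Suc k)"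

lemma continuous_on_potM: "continuous_on K potM"
  unfolding potM_def[abs_def]
  by (intro continuous_intros \<gamma>_cont)

lemma potM_nonneg: "x \<in> K \<Longrightarrow> 0 \<le> potM x"
  unfolding potM_def using \<gamma>max_bounds by simp

lemma abs_potM_le: "x \<in> K \<Longrightarrow> \<bar>potM x\<bar> \<le> \<gamma>max - \<gamma>min"
  unfolding potM_def using \<gamma>max_bounds \<gamma>min_bounds
  by simp

lemma cM_bounds: "0 < cM" "0 \<le> qM" "qM < cM" "cM - qM = \<gamma>min"
  unfolding cM_def qM_def using dI_pos \<gamma>min_bounds \<gamma>max_bounds by auto

lemma continuous_on_M_pow: "continuous_on K u \<Longrightarrow> continuous_on K ((M ^^ k) u)"
  unfolding M_def by (rule continuous_on_nonlocal_op_pow[OF continuous_on_potM])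

lemma supn_M_pow_le:
  assumes u: "continuous_on K u"
  shows "supn ((M ^^ k) u) \<le> qM ^ k * supn u"
proof -
  have "supn ((nonlocal_op dI potM ^^ k) u) \<le> (\<bar>dI\<bar> + (\<gamma>max - \<gamma>min)) ^ k * supn u"
    by (rule supn_nonlocal_op_pow_le[OF continuous_on_potM u abs_potM_le])
  then show ?thesis unfolding M_def qM_def using dI_pos by (simp add: add_diff_eq)
qed

lemma M_nonneg:
  assumes u: "continuous_on K u" and pos: "\<And>y. y \<in> K \<Longrightarrow> 0 \<le> u y" and x: "x \<in> K"
  shows "0 \<le> M u x"
  unfolding M_def nonlocal_op_def
  using conv_nonneg[OF u, of x] pos dom_subset_K potM_nonneg[OF x] pos[OF x] dI_pos
  by (auto intro!: add_nonneg_nonneg mult_nonneg_nonneg)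

lemma M_pow_nonneg:
  assumes u: "continuous_on K u" and pos: "\<And>y. y \<in> K \<Longrightarrow> 0 \<le> u y" and x: "x \<in> K"
  shows "0 \<le> (M ^^ k) u x"
  using x
proof (induction k arbitrary: x)
  case (Suc k)
  then show ?case using M_nonneg[OF continuous_on_M_pow[OF u, of k]] by simp
qed (use pos in simp)

lemma A_eq_M_shift: "A u x = M u x - cM * u x"
  unfolding A_eq M_def nonlocal_op_def potA_def potM_def cM_def by (simp add: algebra_simps)

lemma continuous_on_G_term: "continuous_on K u \<Longrightarrow> continuous_on K (\<lambda>y. (M ^^ k) u y / cM ^ Suc k)"
  by (intro continuous_intros continuous_on_M_pow) (use cM_bounds in auto)

lemma supn_G_term_le:
  assumes u: "continuous_on K u"
  shows "supn (\<lambda>y. (M ^^ k) u y / cM ^ Suc k) \<le> (qM / cM) ^ k * (supn u / cM)"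
proof (rule supn_le)
  fix x assume x: "x \<in> K"
  have "\<bar>(M ^^ k) u x / cM ^ Suc k\<bar> = \<bar>(M ^^ k) u x\<bar> / cM ^ Suc k" using cM_bounds by simp
  also have "\<dots> \<le> qM ^ k * supn u / cM ^ Suc k"
    using abs_le_supn[OF continuous_on_M_pow[OF u] x, of k] supn_M_pow_le[OF u, of k] cM_bounds
    by (intro divide_right_mono) auto
  also have "\<dots> = (qM / cM) ^ k * (supn u / cM)" by (simp add: power_divide)
  finally show "\<bar>(M ^^ k) u x / cM ^ Suc k\<bar> \<le> (qM / cM) ^ k * (supn u / cM)" .
qed

lemma summable_supn_G_terms:
  assumes u: "continuous_on K u"
  shows "summable (\<lambda>k. supn (\<lambda>y. (M ^^ k) u y / cM ^ Suc k))"
proof (rule summable_comparison_test[OF _ summable_mult2[OF summable_geometric]])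
  show "norm (qM / cM) < 1" using cM_bounds by simp
  show "\<exists>N. \<forall>n\<ge>N. norm (supn (\<lambda>y. (M ^^ n) u y / cM ^ Suc n)) \<le> (qM / cM) ^ n * (supn u / cM)"
    using supn_G_term_le[OF u] supn_nonneg[OF continuous_on_G_term[OF u]] by auto
qed

lemma continuous_on_G: "continuous_on K u \<Longrightarrow> continuous_on K (G u)"
  unfolding G_def[abs_def]
  by (rule continuous_on_suminf_supn[OF continuous_on_G_term summable_supn_G_terms])

lemma summable_G_series: "continuous_on K u \<Longrightarrow> x \<in> K \<Longrightarrow> summable (\<lambda>k. (M ^^ k) u x / cM ^ Suc k)"
  by (rule summable_of_supn(1)[OF continuous_on_G_term summable_supn_G_terms])

lemma A_G:
  assumes u: "continuous_on K u" and x: "x \<in> K"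
  shows "A (G u) x = - u x"
proof -
  define a where "a k = (M ^^ k) u x / cM ^ k" for k
  have sa: "summable a"
  proof -
    have "summable (\<lambda>k. cM * ((M ^^ k) u x / cM ^ Suc k))"
      by (rule summable_mult[OF summable_G_series[OF u x]])
    moreover have "cM * ((M ^^ k) u x / cM ^ Suc k) = a k" for k unfolding a_def using cM_bounds
      by simp
    ultimately show ?thesis by simp
  qed
  have "M (G u) x = (\<Sum>k. M (\<lambda>y. (M ^^ k) u y / cM ^ Suc k) x)"
    unfolding G_def[abs_def] M_def
    by (rule nonlocal_op_suminf[OF continuous_on_G_term[OF u, unfolded M_def] summable_supn_G_terms[OF u, unfolded M_def] x])
  also have "\<dots> = (\<Sum>k. a (Suc k))"
  proof -
    have "M (\<lambda>y. (M ^^ k) u y / cM ^ Suc k) x = a (Suc k)" for k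
      using nonlocal_op_scale[of dI potM "1 / cM ^ Suc k" "(M ^^ k) u" x] unfolding a_def M_def
      by (simp add: funpow_swap1)
    then show ?thesis by simp
  qed
  also have "\<dots> = suminf a - u x" using suminf_split_head[OF sa] unfolding a_def by simp
  finally have 1: "M (G u) x = suminf a - u x" .
  have 2: "cM * G u x = suminf a"
  proof -
    have "cM * G u x = (\<Sum>k. cM * ((M ^^ k) u x / cM ^ Suc k))"
      unfolding G_def by (rule suminf_mult[symmetric, OF summable_G_series[OF u x]])
    also have "\<dots> = suminf a" unfolding a_def using cM_bounds by simp
    finally show ?thesis .
  qed
  show ?thesis unfolding A_eq_M_shift 1 2 by simp
qed

lemma G_ge:
  assumes u: "continuous_on K u" and pos: "\<And>y. y \<in> K \<Longrightarrow> 0 \<le> u y" and x: "x \<in> K"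
  shows "u x / cM \<le> G u x"
proof -
  have "G u x = (\<Sum>k. (M ^^ Suc k) u x / cM ^ Suc (Suc k)) + u x / cM"
    unfolding G_def using suminf_split_head[OF summable_G_series[OF u x]] by simp
  moreover have "0 \<le> (\<Sum>k. (M ^^ Suc k) u x / cM ^ Suc (Suc k))"
  proof (rule suminf_nonneg)
    show "summable (\<lambda>k. (M ^^ Suc k) u x / cM ^ Suc (Suc k))"
      using summable_Suc_iff[THEN iffD2, OF summable_G_series[OF u x]] .
    show "0 \<le> (M ^^ Suc k) u x / cM ^ Suc (Suc k)" for k
      using M_pow_nonneg[OF u pos x, of "Suc k"] cM_bounds(1) by (intro divide_nonneg_pos) auto
  qed
  ultimately show ?thesis by simp
qed

lemma G_scale:
  assumes "continuous_on K u" "x \<in> K"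
  shows "G (\<lambda>y. c * u y) x = c * G u x"
proof -
  have "G (\<lambda>y. c * u y) x = (\<Sum>k. c * ((M ^^ k) u x / cM ^ Suc k))"
    unfolding G_def M_def nonlocal_op_pow_scale by simp
  also have "\<dots> = c * G u x" unfolding G_def by (rule suminf_mult[OF summable_G_series[OF assms]])
  finally show ?thesis .
qed

lemma G_add:
  assumes "continuous_on K u" "continuous_on K v" "x \<in> K"
  shows "G (\<lambda>y. u y + v y) x = G u x + G v x"
proof -
  have "G (\<lambda>y. u y + v y) x = (\<Sum>k. (M ^^ k) u x / cM ^ Suc k + (M ^^ k) v x / cM ^ Suc k)"
    unfolding G_def M_def nonlocal_op_pow_add[OF continuous_on_potM assms(1,2)]
    by (simp add: add_divide_distrib)
  also have "\<dots> = G u x + G v x" unfolding G_def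
    by (rule suminf_add[symmetric, OF summable_G_series[OF assms(1,3)] summable_G_series[OF assms(2,3)]])
  finally show ?thesis .
qed

lemma isCont_T: "continuous_on K u \<Longrightarrow> x \<in> K \<Longrightarrow> isCont (\<lambda>t. T t u x) s"
  by (rule DERIV_isCont[OF T_has_real_derivative])

lemma T_measurable:
  assumes "continuous_on K u" "x \<in> K"
  shows "(\<lambda>t. T t u x) \<in> borel_measurable borel"
  by (rule borel_measurable_continuous_onI, rule continuous_at_imp_continuous_on) (use isCont_T[OF assms] in auto)

lemma T_tendsto_zero:
  assumes u: "continuous_on K u" and x: "x \<in> K"
  shows "((\<lambda>s. T s u x) \<longlongrightarrow> 0) at_top"
proof (rule Lim_null_comparison[OF _ exp_neg_tendsto_zero])
  show "\<forall>\<^sub>F s in at_top. norm (T s u x) \<le> supn u * exp (- (\<gamma>min / 2) * s)"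
    using eventually_ge_at_top[of "0::real"] by eventually_elim (use abs_T_le_exp[OF u x] in auto)
  show "0 < \<gamma>min / 2" using \<gamma>min_bounds(1) by simp
qed

text \<open>Since \<open>A (G u) = - u\<close>, the function \<open>s \<mapsto> - T s (G u) x\<close> is a primitive of \<open>s \<mapsto> T s u x\<close>.\<close>

lemma integral_T:
  assumes u: "continuous_on K u" and x: "x \<in> K"
  shows "(LINT t:{0..}|lborel. T t u x) = G u x"
proof -
  have g: "continuous_on K (G u)" by (rule continuous_on_G[OF u])
  have primitive: "((\<lambda>s. - T s (G u) x) has_real_derivative T s u x) (at s)" for s
  proof -
    have "T s (A (G u)) x = T s (\<lambda>y. -1 * u y) x"
      by (rule T_cong[OF _ x]) (use A_G[OF u] in simp)
    also have "\<dots> = - T s u x" using T_scale[OF u x, of s "-1"] by simp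
    finally show ?thesis using DERIV_minus[OF T_has_real_derivative[OF g x, of s]] by simp
  qed
  have "((\<lambda>s. G u x - T s (G u) x) \<longlongrightarrow> G u x) at_top"
    using tendsto_diff[OF tendsto_const T_tendsto_zero[OF g x]] by simp
  moreover have "\<forall>\<^sub>F s in at_top. G u x - T s (G u) x = (\<integral>t. T t u x * indicator {0..s} t \<partial>lborel)"
    using eventually_ge_at_top[of "0::real"]
  proof eventually_elim
    case (elim s)
    show ?case
      using integral_FTC_Icc_real[OF elim primitive isCont_T[OF u x]] by (simp add: T_zero)
  qed
  ultimately have lim_G: "((\<lambda>s. \<integral>t. T t u x * indicator {0..s} t \<partial>lborel) \<longlongrightarrow> G u x) at_top"
    by (rule Lim_transform_eventually)
  have lim_integral: "((\<lambda>s. \<integral>t. T t u x * indicator {0..s} t \<partial>lborel) \<longlongrightarrow>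
      (\<integral>t. T t u x * indicator {0..} t \<partial>lborel)) at_top"
    using abs_T_le_exp[OF u x] \<gamma>min_bounds(1)
    by (intro tendsto_integral_Icc_exp_dominated[OF T_measurable[OF u x], where \<epsilon>="\<gamma>min / 2"]) auto
  have "(\<integral>t. T t u x * indicator {0..} t \<partial>lborel) = G u x"
    using tendsto_unique[OF trivial_limit_at_top_linorder lim_integral lim_G] .
  then show ?thesis unfolding set_lebesgue_integral_def by (simp add: mult.commute)
qed

end

section \<open>The next-generation operator\<close>

locale next_generation = dispersal_semigroup +
  fixes \<beta> :: "'a \<Rightarrow> real"
  assumes \<beta>_cont: "continuous_on K \<beta>" and \<beta>_pos: "\<And>x. x \<in> K \<Longrightarrow> 0 < \<beta> x"
begin

abbreviation "L \<equiv> nextgen \<Omega> J dI \<gamma> \<beta>"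

definition "qL = supn \<beta> / \<gamma>min"

lemma L_eq_G: "continuous_on K u \<Longrightarrow> x \<in> K \<Longrightarrow> L u x = \<beta> x * G u x"
  unfolding nextgen_def by (simp add: integral_T)

lemma continuous_on_L:
  assumes u: "continuous_on K u"
  shows "continuous_on K (L u)"
proof -
  have "continuous_on K (\<lambda>x. \<beta> x * G u x)" by (intro continuous_intros \<beta>_cont continuous_on_G u)
  then show ?thesis by (rule continuous_on_eq) (simp add: L_eq_G[OF u])
qed

lemma L_cong:
  assumes "\<And>y. y \<in> K \<Longrightarrow> u y = v y" "x \<in> K"
  shows "L u x = L v x"
proof -
  have "(\<lambda>t. T t u x) = (\<lambda>t. T t v x)" using T_cong[OF assms] by auto
  then show ?thesis unfolding nextgen_def by simp
qed

lemma L_scale: "continuous_on K u \<Longrightarrow> x \<in> K \<Longrightarrow> L (\<lambda>y. c * u y) x = c * L u x"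
  using L_eq_G[of "\<lambda>y. c * u y" x] L_eq_G[of u x] G_scale[of u x c] by (simp add: continuous_intros)

lemma L_add: "continuous_on K u \<Longrightarrow> continuous_on K v \<Longrightarrow> x \<in> K \<Longrightarrow> L (\<lambda>y. u y + v y) x = L u x + L v x"
  using L_eq_G[of "\<lambda>y. u y + v y" x] L_eq_G[of u x] L_eq_G[of v x] G_add[of u v x]
  by (simp add: continuous_intros algebra_simps)

lemma L_nonneg: "continuous_on K u \<Longrightarrow> (\<And>y. y \<in> K \<Longrightarrow> 0 \<le> u y) \<Longrightarrow> x \<in> K \<Longrightarrow> 0 \<le> L u x"
  using L_eq_G[of u x] G_ge[of u x] \<beta>_pos[of x] cM_bounds(1)
  by (metis (no_types, lifting) divide_nonneg_pos less_eq_real_def mult_nonneg_nonneg order_trans)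

lemma supn_G_le:
  assumes u: "continuous_on K u"
  shows "supn (G u) \<le> supn u / \<gamma>min"
proof -
  have "supn (G u) \<le> (\<Sum>k. supn (\<lambda>y. (M ^^ k) u y / cM ^ Suc k))"
    unfolding G_def[abs_def]
    by (rule supn_suminf_le[OF continuous_on_G_term[OF u] summable_supn_G_terms[OF u]])
  also have "\<dots> \<le> (\<Sum>k. (qM / cM) ^ k * (supn u / cM))"
    using supn_G_term_le[OF u] summable_supn_G_terms[OF u] cM_bounds
    by (intro suminf_le summable_mult2 summable_geometric) auto
  also have "\<dots> = supn u / cM / (1 - qM / cM)"
    using cM_bounds
    by (subst suminf_mult2[symmetric]) (auto intro!: summable_geometric simp: suminf_geometric)
  also have "\<dots> = supn u / \<gamma>min"
  proof -
    have "1 - qM / cM = \<gamma>min / cM" using cM_bounds by (simp add: field_simps)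
    then show ?thesis using cM_bounds \<gamma>min_bounds by simp
  qed
  finally show ?thesis .
qed

lemma qL_nonneg: "0 \<le> qL"
  unfolding qL_def using supn_nonneg[OF \<beta>_cont] \<gamma>min_bounds by simp

lemma abs_L_le:
  assumes u: "continuous_on K u" and x: "x \<in> K"
  shows "\<bar>L u x\<bar> \<le> qL * supn u"
proof -
  have "\<bar>L u x\<bar> = \<bar>\<beta> x\<bar> * \<bar>G u x\<bar>" using L_eq_G[OF u x] by (simp add: abs_mult)
  also have "\<dots> \<le> supn \<beta> * (supn u / \<gamma>min)"
    using abs_le_supn[OF \<beta>_cont x] abs_le_supn[OF continuous_on_G[OF u] x] supn_G_le[OF u]
    by (intro mult_mono) auto
  finally show ?thesis unfolding qL_def by simp
qed

lemma continuous_on_L_pow: "continuous_on K u \<Longrightarrow> continuous_on K ((L ^^ n) u)"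
  by (induction n) (auto intro: continuous_on_L)

lemma L_pow_cong: "(\<And>y. y \<in> K \<Longrightarrow> u y = v y) \<Longrightarrow> x \<in> K \<Longrightarrow> (L ^^ n) u x = (L ^^ n) v x"
proof (induction n arbitrary: x)
  case (Suc n)
  then show ?case by (auto intro!: L_cong)
qed simp

lemma L_pow_scale:
  assumes u: "continuous_on K u"
  shows "x \<in> K \<Longrightarrow> (L ^^ n) (\<lambda>y. c * u y) x = c * (L ^^ n) u x"
proof (induction n arbitrary: x)
  case (Suc n)
  have "(L ^^ Suc n) (\<lambda>y. c * u y) x = L (\<lambda>y. c * (L ^^ n) u y) x"
    using Suc by (auto intro!: L_cong)
  also have "\<dots> = c * (L ^^ Suc n) u x" using L_scale[OF continuous_on_L_pow[OF u] Suc.prems] by simp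
  finally show ?case .
qed simp

lemma L_pow_nonneg:
  assumes u: "continuous_on K u" and pos: "\<And>y. y \<in> K \<Longrightarrow> 0 \<le> u y"
  shows "x \<in> K \<Longrightarrow> 0 \<le> (L ^^ n) u x"
proof (induction n arbitrary: x)
  case (Suc n)
  then show ?case using L_nonneg[OF continuous_on_L_pow[OF u]] by simp
qed (use pos in simp)

lemma supn_L_pow_le:
  assumes u: "continuous_on K u"
  shows "supn ((L ^^ n) u) \<le> qL ^ n * supn u"
proof (induction n)
  case (Suc n)
  have "supn ((L ^^ Suc n) u) \<le> qL * supn ((L ^^ n) u)"
    by (rule supn_le) (use abs_L_le[OF continuous_on_L_pow[OF u]] in simp)
  also have "\<dots> \<le> qL * (qL ^ n * supn u)" by (rule mult_left_mono[OF Suc qL_nonneg])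
  finally show ?case by simp
qed simp

lemma L_sum:
  fixes N :: nat and f :: "nat \<Rightarrow> 'a \<Rightarrow> real"
  assumes f: "\<And>k. continuous_on K (f k)" and x: "x \<in> K"
  shows "L (\<lambda>y. \<Sum>k<N. f k y) x = (\<Sum>k<N. L (f k) x)"
proof (induction N)
  case 0
  then show ?case using L_scale[of "\<lambda>_. 0" x 0] x by simp
next
  case (Suc N)
  have "L (\<lambda>y. \<Sum>k<Suc N. f k y) x = L (\<lambda>y. (\<Sum>k<N. f k y) + f N y) x" by simp
  also have "\<dots> = L (\<lambda>y. \<Sum>k<N. f k y) x + L (f N) x"
    by (rule L_add[OF _ f x]) (intro continuous_intros f)
  finally show ?case using Suc by simp
qed

definition "unit_ball = {\<phi> :: 'a \<Rightarrow> real. continuous_on K \<phi> \<and> (\<forall>x\<in>K. \<bar>\<phi> x\<bar> \<le> 1)}"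

definition "normL n = opnorm_on K (L ^^ n)"

lemma normL_eq: "normL n = (SUP \<phi>\<in>unit_ball. (SUP x\<in>K. \<bar>(L ^^ n) \<phi> x\<bar>))"
  unfolding normL_def opnorm_on_def unit_ball_def ..

lemma supn_le_one: "\<phi> \<in> unit_ball \<Longrightarrow> supn \<phi> \<le> 1"
  unfolding unit_ball_def by (auto intro: supn_le)

lemma abs_L_pow_unit_le:
  assumes "\<phi> \<in> unit_ball" "x \<in> K"
  shows "\<bar>(L ^^ n) \<phi> x\<bar> \<le> qL ^ n"
proof -
  have c: "continuous_on K \<phi>" using assms(1) unfolding unit_ball_def by simp
  have "\<bar>(L ^^ n) \<phi> x\<bar> \<le> supn ((L ^^ n) \<phi>)"
    by (rule abs_le_supn[OF continuous_on_L_pow[OF c] assms(2)])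
  also have "\<dots> \<le> qL ^ n * supn \<phi>" by (rule supn_L_pow_le[OF c])
  also have "\<dots> \<le> qL ^ n * 1" using supn_le_one[OF assms(1)] qL_nonneg by (intro mult_left_mono) auto
  finally show ?thesis by simp
qed

lemma bdd_above_L_pow_unit: "\<phi> \<in> unit_ball \<Longrightarrow> bdd_above ((\<lambda>x. \<bar>(L ^^ n) \<phi> x\<bar>) ` K)"
  by (rule bdd_aboveI2[where M="qL ^ n"]) (rule abs_L_pow_unit_le)

lemma Sup_L_pow_unit_le: "\<phi> \<in> unit_ball \<Longrightarrow> (SUP x\<in>K. \<bar>(L ^^ n) \<phi> x\<bar>) \<le> qL ^ n"
  using abs_L_pow_unit_le K_nonempty by (intro cSUP_least) auto

lemma zero_in_unit_ball: "(\<lambda>_. 0) \<in> unit_ball"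
  unfolding unit_ball_def by simp

lemma bdd_above_Sup_L_pow: "bdd_above ((\<lambda>\<phi>. SUP x\<in>K. \<bar>(L ^^ n) \<phi> x\<bar>) ` unit_ball)"
  by (rule bdd_aboveI2[where M="qL ^ n"]) (rule Sup_L_pow_unit_le)

lemma abs_L_pow_unit_le_normL:
  assumes "\<phi> \<in> unit_ball" "x \<in> K"
  shows "\<bar>(L ^^ n) \<phi> x\<bar> \<le> normL n"
proof -
  have "\<bar>(L ^^ n) \<phi> x\<bar> \<le> (SUP x\<in>K. \<bar>(L ^^ n) \<phi> x\<bar>)"
    by (rule cSUP_upper[OF assms(2) bdd_above_L_pow_unit[OF assms(1)]])
  also have "\<dots> \<le> normL n" unfolding normL_eq by (rule cSUP_upper[OF assms(1) bdd_above_Sup_L_pow])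
  finally show ?thesis .
qed

lemma normL_nonneg: "0 \<le> normL n"
proof -
  obtain x where "x \<in> K" using K_nonempty by (meson ex_in_conv)
  then show ?thesis using abs_L_pow_unit_le_normL[OF zero_in_unit_ball]
    by (meson abs_ge_zero order_trans)
qed

lemma abs_L_pow_le_normL:
  assumes c: "continuous_on K \<phi>" and x: "x \<in> K"
  shows "\<bar>(L ^^ n) \<phi> x\<bar> \<le> normL n * supn \<phi>"
proof (cases "supn \<phi> = 0")
  case True
  have z: "\<phi> y = 0 * \<phi> y" if "y \<in> K" for y using abs_le_supn[OF c that] True by simp
  have "(L ^^ n) \<phi> x = (L ^^ n) (\<lambda>y. 0 * \<phi> y) x" by (rule L_pow_cong[OF z x])
  also have "\<dots> = 0" using L_pow_scale[OF c x, of n 0] by simp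
  finally show ?thesis using True by simp
next
  case False
  define N where "N = supn \<phi>"
  have N: "0 < N" using False supn_nonneg[OF c] unfolding N_def by simp
  define \<psi> where "\<psi> y = \<phi> y / N" for y
  have \<psi>c: "continuous_on K \<psi>" unfolding \<psi>_def[abs_def] using c N by (intro continuous_intros) auto
  have \<psi>B: "\<psi> \<in> unit_ball" unfolding unit_ball_def
  proof (intro CollectI conjI ballI \<psi>c)
    fix y assume "y \<in> K"
    then show "\<bar>\<psi> y\<bar> \<le> 1" unfolding \<psi>_def using abs_le_supn[OF c \<open>y \<in> K\<close>] N unfolding N_def
      by (simp add: divide_le_eq_1 abs_divide)
  qed
  have eq: "\<phi> = (\<lambda>y. N * \<psi> y)" unfolding \<psi>_def using N by auto
  have "(L ^^ n) \<phi> x = N * (L ^^ n) \<psi> x" unfolding eq by (rule L_pow_scale[OF \<psi>c x])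
  then have "\<bar>(L ^^ n) \<phi> x\<bar> = N * \<bar>(L ^^ n) \<psi> x\<bar>" using N by (simp add: abs_mult)
  also have "\<dots> \<le> N * normL n" using abs_L_pow_unit_le_normL[OF \<psi>B x] N by simp
  finally show ?thesis unfolding N_def by (simp add: mult.commute)
qed

lemma normL_submult: "normL (m + n) \<le> normL m * normL n"
  unfolding normL_eq[of "m + n"]
proof (rule cSUP_least[OF _ cSUP_least])
  show "unit_ball \<noteq> {}" using zero_in_unit_ball by blast
  show "K \<noteq> {}" by (rule K_nonempty)
  fix \<phi> x assume \<phi>: "\<phi> \<in> unit_ball" and x: "x \<in> K"
  have c: "continuous_on K \<phi>" using \<phi> unfolding unit_ball_def by simp
  have "\<bar>(L ^^ (m + n)) \<phi> x\<bar> = \<bar>(L ^^ m) ((L ^^ n) \<phi>) x\<bar>" by (simp add: funpow_add)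
  also have "\<dots> \<le> normL m * supn ((L ^^ n) \<phi>)"
    by (rule abs_L_pow_le_normL[OF continuous_on_L_pow[OF c] x])
  also have "\<dots> \<le> normL m * normL n"
  proof (rule mult_left_mono[OF _ normL_nonneg])
    show "supn ((L ^^ n) \<phi>) \<le> normL n"
    proof (rule supn_le)
      fix y assume "y \<in> K"
      then show "\<bar>(L ^^ n) \<phi> y\<bar> \<le> normL n" by (rule abs_L_pow_unit_le_normL[OF \<phi>])
    qed
  qed
  finally show "\<bar>(L ^^ (m + n)) \<phi> x\<bar> \<le> normL m * normL n" .
qed

lemma R0_eq_lim_normL: "R0 \<Omega> J dI \<gamma> \<beta> = lim (\<lambda>n. normL n powr (1 / real n))"
  unfolding R0_def spectral_radius_on_def normL_def ..

lemma normL_le_half: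
  assumes R: "R0 \<Omega> J dI \<gamma> \<beta> < 1"
  shows "\<exists>N\<ge>1. normL N \<le> 1 / 2"
proof -
  have lim: "(\<lambda>n. normL n powr (1 / real n)) \<longlonglongrightarrow> R0 \<Omega> J dI \<gamma> \<beta>"
    using submultiplicative_root_tendsto_Inf[OF normL_nonneg normL_submult]
    unfolding R0_eq_lim_normL by (simp add: limI)
  then have "0 \<le> R0 \<Omega> J dI \<gamma> \<beta>" by (rule tendsto_lowerbound) auto
  obtain \<rho> where \<rho>: "R0 \<Omega> J dI \<gamma> \<beta> < \<rho>" "\<rho> < 1" using R dense by blast
  have "\<forall>\<^sub>F n in sequentially. normL n powr (1 / real n) < \<rho>"
    using lim \<rho>(1) by (rule order_tendstoD)
  moreover have "\<forall>\<^sub>F n in sequentially. \<rho> ^ n < 1 / 2"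
    using LIMSEQ_power_zero[of \<rho>] \<rho> \<open>0 \<le> R0 \<Omega> J dI \<gamma> \<beta>\<close> by (intro order_tendstoD) auto
  ultimately have "\<forall>\<^sub>F n in sequentially. 1 \<le> n \<and> normL n \<le> 1 / 2"
    using eventually_ge_at_top[of 1]
    by eventually_elim (use less_power_of_root_less[OF normL_nonneg] in fastforce)
  then show ?thesis by (auto dest: eventually_happens)
qed

lemma L_sum_powers:
  assumes u: "continuous_on K u" and x: "x \<in> K"
  shows "L (\<lambda>y. \<Sum>k<N. (L ^^ k) u y) x = (\<Sum>k<N. (L ^^ k) u x) - u x + (L ^^ N) u x"
proof -
  have "L (\<lambda>y. \<Sum>k<N. (L ^^ k) u y) x = (\<Sum>k<N. (L ^^ Suc k) u x)"
    using L_sum[OF continuous_on_L_pow[OF u] x] by simp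
  also have "\<dots> = (\<Sum>k<N. (L ^^ k) u x) - u x + (L ^^ N) u x"
    using sum.lessThan_Suc_shift[of "\<lambda>k. (L ^^ k) u x" N] by simp
  finally show ?thesis .
qed

text \<open>With \<open>\<phi> = \<Sum>k<N. L\<^sup>k 1\<close> and \<open>\<parallel>L\<^sup>N\<parallel> \<le> 1/2\<close>, the function \<open>w = G \<phi>\<close> satisfies
  \<open>(A + \<beta>) w = - \<phi> + L \<phi> = L\<^sup>N 1 - 1 \<le> -1/2\<close>.\<close>

lemma strict_supersolution:
  assumes R: "R0 \<Omega> J dI \<gamma> \<beta> < 1"
  shows "\<exists>w. continuous_on K w \<and> (\<forall>x\<in>K. 1 / cM \<le> w x)
     \<and> (\<forall>x\<in>K. dI * conv w x + (- dI - \<gamma> x + \<beta> x) * w x \<le> - 1 / 2)"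
proof -
  obtain N where N: "1 \<le> N" "normL N \<le> 1 / 2" using normL_le_half[OF R] by blast
  define \<phi> where "\<phi> y = (\<Sum>k<N. (L ^^ k) (\<lambda>_. 1) y)" for y
  have \<phi>: "continuous_on K \<phi>" unfolding \<phi>_def by (intro continuous_intros continuous_on_L_pow)
  have \<phi>_ge: "1 \<le> \<phi> x" if "x \<in> K" for x
  proof -
    have "\<phi> x = 1 + (\<Sum>k<N - 1. (L ^^ Suc k) (\<lambda>_. 1) x)"
      unfolding \<phi>_def using N(1) sum.lessThan_Suc_shift[of "\<lambda>k. (L ^^ k) (\<lambda>_. 1) x" "N - 1"] by simp
    moreover have "0 \<le> (\<Sum>k<N - 1. (L ^^ Suc k) (\<lambda>_. 1) x)"
      by (intro sum_nonneg L_pow_nonneg[OF _ _ that]) simp_all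
    ultimately show ?thesis by simp
  qed
  have "1 / cM \<le> G \<phi> x" if "x \<in> K" for x
  proof -
    have "1 / cM \<le> \<phi> x / cM" using \<phi>_ge[OF that] cM_bounds(1) by (intro divide_right_mono) auto
    also have "\<dots> \<le> G \<phi> x" using \<phi>_ge by (intro G_ge[OF \<phi> _ that]) force
    finally show ?thesis .
  qed
  moreover have "dI * conv (G \<phi>) x + (- dI - \<gamma> x + \<beta> x) * G \<phi> x \<le> - 1 / 2" if x: "x \<in> K" for x
  proof -
    have "(L ^^ N) (\<lambda>_. 1) x \<le> normL N * supn (\<lambda>_::'a. 1::real)"
      using abs_L_pow_le_normL[of "\<lambda>_. 1" x N] x by simp
    also have "\<dots> \<le> 1 / 2" using N(2) K_nonempty by (simp add: supn_def)
    finally have "(L ^^ N) (\<lambda>_. 1) x \<le> 1 / 2" .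
    moreover have "dI * conv (G \<phi>) x + (- dI - \<gamma> x + \<beta> x) * G \<phi> x = A (G \<phi>) x + L \<phi> x"
      unfolding A_eq nonlocal_op_def potA_def L_eq_G[OF \<phi> x] by (simp add: algebra_simps)
    moreover have "L \<phi> x = \<phi> x - 1 + (L ^^ N) (\<lambda>_. 1) x"
      unfolding \<phi>_def using L_sum_powers[of "\<lambda>_. 1" x N] x by simp
    ultimately show ?thesis unfolding A_G[OF \<phi> x] by simp
  qed
  ultimately show ?thesis using continuous_on_G[OF \<phi>] by blast
qed

lemma infection_exp_decay:
  fixes v D :: "'a \<Rightarrow> real \<Rightarrow> real"
  assumes R0: "R0 \<Omega> J dI \<gamma> \<beta> < 1"
    and cont: "continuous_on (K \<times> {0..}) (\<lambda>(x, t). v x t)"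
    and deriv: "\<And>x t. x \<in> K \<Longrightarrow> 0 < t \<Longrightarrow> (v x has_real_derivative D x t) (at t)"
    and ineq: "\<And>x t. x \<in> K \<Longrightarrow> 0 < t \<Longrightarrow>
      D x t \<le> dI * (conv (\<lambda>y. v y t) x - v x t) + (\<beta> x - \<gamma> x) * v x t"
  obtains C \<epsilon> where "0 \<le> C" "0 < \<epsilon>" "\<And>x t. x \<in> K \<Longrightarrow> 0 \<le> t \<Longrightarrow> v x t \<le> C * exp (- \<epsilon> * t)"
proof -
  obtain w where w: "continuous_on K w" "\<forall>x\<in>K. 1 / cM \<le> w x"
    and super: "\<forall>x\<in>K. dI * conv w x + (- dI - \<gamma> x + \<beta> x) * w x \<le> - 1 / 2"
    using strict_supersolution[OF R0] by blast
  have w_pos: "0 < w x" if "x \<in> K" for x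
    using w(2) that cM_bounds(1) by (meson divide_pos_pos less_le_trans zero_less_one)
  show thesis
  proof (rule exp_decay_by_strict_supersolution[OF _ _ w(1) w_pos _ _ continuous_on_subset[OF cont] deriv,
        where a=dI and b="\<lambda>x. - dI - \<gamma> x + \<beta> x" and m="1 / 2" and C=0 and \<epsilon>=1])
    show "\<bar>- dI - \<gamma> x + \<beta> x\<bar> \<le> dI + \<gamma>max + supn \<beta>" if "x \<in> K" for x
      using \<gamma>max_bounds(1)[OF that] \<gamma>_pos[OF that] \<beta>_pos[OF that] abs_le_supn[OF \<beta>_cont that] dI_pos
      by auto
    show "D x t \<le> dI * conv (\<lambda>y. v y t) x + (- dI - \<gamma> x + \<beta> x) * v x t + 0 * exp (- 1 * t)"
      if "x \<in> K" "0 < t" for x t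
      using ineq[OF that] by (simp add: algebra_simps)
  qed (use that super dI_pos in auto)
qed

lemma continuous_on_incidence:
  assumes "continuous_on (K \<times> {0..}) (\<lambda>(x, t). S x t)" "continuous_on (K \<times> {0..}) (\<lambda>(x, t). I x t)"
    and "\<forall>x\<in>K. \<forall>t\<ge>0. 0 \<le> S x t \<and> 0 \<le> I x t"
  shows "continuous_on (K \<times> {0..}) (\<lambda>(x, t). \<beta> x * incid (S x t) (I x t))"
  using continuous_on_comp_fst[OF \<beta>_cont] continuous_on_incid[OF assms(1,2)] assms(3)
  by (auto simp: case_prod_unfold intro!: continuous_intros)

lemma incidence_le:
  assumes "x \<in> K" "0 \<le> s" "0 \<le> i"
  shows "0 \<le> \<beta> x * incid s i" "\<beta> x * incid s i \<le> \<beta> x * i" "\<beta> x * i \<le> supn \<beta> * i"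
  using incid_nonneg[OF assms(2,3)] incid_le[OF assms(2,3)] \<beta>_pos[OF assms(1)]
    abs_le_supn[OF \<beta>_cont assms(1)] assms(3)
  by (auto intro: mult_left_mono mult_right_mono)

lemma SIS_infected_exp_decay:
  assumes R0: "R0 \<Omega> J dI \<gamma> \<beta> < 1"
    and cont: "continuous_on (K \<times> {0..}) (\<lambda>(x, t). S x t)" "continuous_on (K \<times> {0..}) (\<lambda>(x, t). I x t)"
    and nonneg: "\<forall>x\<in>K. \<forall>t\<ge>0. 0 \<le> S x t \<and> 0 \<le> I x t"
    and sol_I: "\<forall>x\<in>\<Omega>. \<forall>t>0. ((I x) has_real_derivative
        (dI * (LINT y|lborel. J (x - y) * (indicator \<Omega> y * I y t - I x t))
         + \<beta> x * incid (S x t) (I x t) - \<gamma> x * I x t)) (at t)"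
  obtains C \<epsilon> where "0 \<le> C" "0 < \<epsilon>" "\<And>x t. x \<in> K \<Longrightarrow> 0 \<le> t \<Longrightarrow> I x t \<le> C * exp (- \<epsilon> * t)"
proof (rule infection_exp_decay[OF R0 cont(2)])
  show "(I x has_real_derivative dI * (conv (\<lambda>y. I y t) x - I x t)
      + (\<beta> x * incid (S x t) (I x t) - \<gamma> x * I x t)) (at t)" if "x \<in> K" "0 < t" for x t
    using sol_I continuous_on_comp_fst[OF \<gamma>_cont] continuous_on_incidence[OF cont nonneg] cont(2)
    by (intro nonlocal_equation_on_closure[OF cont(2) _ _ that])
       (auto simp: add_diff_eq case_prod_unfold intro!: continuous_intros)
  show "dI * (conv (\<lambda>y. I y t) x - I x t) + (\<beta> x * incid (S x t) (I x t) - \<gamma> x * I x t)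
      \<le> dI * (conv (\<lambda>y. I y t) x - I x t) + (\<beta> x - \<gamma> x) * I x t" if "x \<in> K" "0 < t" for x t
  proof -
    have "\<beta> x * incid (S x t) (I x t) \<le> \<beta> x * I x t" using incidence_le(2)[OF that(1)] nonneg that
      by auto
    then show ?thesis by (simp add: algebra_simps)
  qed
qed (use that in auto)

lemma SIS_susceptible_uniform_convergence:
  assumes dS: "0 < dS" and \<Lambda>: "continuous_on K \<Lambda>" "\<And>x. x \<in> K \<Longrightarrow> 0 < \<Lambda> x"
    and Sstar: "continuous_on K Sstar" "\<And>x. x \<in> K \<Longrightarrow> 0 < Sstar x"
      "\<And>x. x \<in> \<Omega> \<Longrightarrow> dS * (LINT y|lborel. J (x - y) * (indicator \<Omega> y * Sstar y - Sstar x)) + \<Lambda> x = 0"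
    and cont: "continuous_on (K \<times> {0..}) (\<lambda>(x, t). S x t)" "continuous_on (K \<times> {0..}) (\<lambda>(x, t). I x t)"
    and nonneg: "\<forall>x\<in>K. \<forall>t\<ge>0. 0 \<le> S x t \<and> 0 \<le> I x t"
    and sol_S: "\<forall>x\<in>\<Omega>. \<forall>t>0. ((S x) has_real_derivative
        (dS * (LINT y|lborel. J (x - y) * (indicator \<Omega> y * S y t - S x t))
         + \<Lambda> x - \<beta> x * incid (S x t) (I x t) + \<gamma> x * I x t)) (at t)"
    and I_le: "\<And>x t. x \<in> K \<Longrightarrow> 0 \<le> t \<Longrightarrow> I x t \<le> C * exp (- \<epsilon> * t)" and C: "0 \<le> C" "0 < \<epsilon>"
  shows "uniform_limit K (\<lambda>t x. S x t) Sstar at_top"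
proof (rule susceptible_uniform_convergence[OF dS \<Lambda> Sstar cont(1), where C="(\<gamma>max + supn \<beta>) * C"])
  show "(S x has_real_derivative dS * (conv (\<lambda>y. S y t) x - S x t)
      + (\<Lambda> x + (\<gamma> x * I x t - \<beta> x * incid (S x t) (I x t)))) (at t)" if "x \<in> K" "0 < t" for x t
    using sol_S continuous_on_comp_fst[OF \<Lambda>(1)] continuous_on_comp_fst[OF \<gamma>_cont]
      continuous_on_incidence[OF cont nonneg] cont(2)
    by (intro nonlocal_equation_on_closure[OF cont(1) _ _ that])
       (auto simp: algebra_simps case_prod_unfold intro!: continuous_intros)
  show "\<bar>\<gamma> x * I x t - \<beta> x * incid (S x t) (I x t)\<bar> \<le> (\<gamma>max + supn \<beta>) * C * exp (- \<epsilon> * t)"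
    if "x \<in> K" "0 < t" for x t
  proof -
    have "0 \<le> \<gamma> x * I x t" "\<gamma> x * I x t \<le> \<gamma>max * I x t"
      using \<gamma>max_bounds(1)[of x] \<gamma>_pos[of x] nonneg that by (auto intro: mult_right_mono)
    then have "\<bar>\<gamma> x * I x t - \<beta> x * incid (S x t) (I x t)\<bar> \<le> (\<gamma>max + supn \<beta>) * I x t"
      using incidence_le[of x "S x t" "I x t"] nonneg that by (simp add: abs_le_iff algebra_simps)
    also have "\<dots> \<le> (\<gamma>max + supn \<beta>) * (C * exp (- \<epsilon> * t))"
      using I_le[of x t] \<gamma>max_bounds \<gamma>min_bounds supn_nonneg[OF \<beta>_cont] that
      by (intro mult_left_mono) auto
    finally show ?thesis by (simp add: ac_simps)
  qed
qed (use C supn_nonneg[OF \<beta>_cont] \<gamma>max_bounds \<gamma>min_bounds in auto)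

end

theorem theorem3p4:
  fixes \<Omega> :: "'a::euclidean_space set"
    and J \<Lambda> \<beta> \<gamma> S0 I0 Sstar :: "'a \<Rightarrow> real"
    and dS dI :: real
    and S I :: "'a \<Rightarrow> real \<Rightarrow> real"
  assumes dom: "open \<Omega>" "connected \<Omega>" "bounded \<Omega>" "\<Omega> \<noteq> {}"
    and diff: "dS > 0" "dI > 0"
    and coeff: "continuous_on (closure \<Omega>) \<Lambda>" "continuous_on (closure \<Omega>) \<beta>"
      "continuous_on (closure \<Omega>) \<gamma>"
      "\<forall>x\<in>closure \<Omega>. \<Lambda> x > 0 \<and> \<beta> x > 0 \<and> \<gamma> x > 0"
    and kernel: "continuous_on UNIV J" "J 0 > 0" "\<forall>x. J x = J (- x) \<and> J x \<ge> 0"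
      "integrable lborel J" "(LINT x|lborel. J x) = 1"
      "\<exists>x\<in>closure \<Omega>. (LINT y:\<Omega>|lborel. J (x - y)) \<noteq> 1"
    and init: "continuous_on (closure \<Omega>) S0" "continuous_on (closure \<Omega>) I0"
      "\<forall>x\<in>closure \<Omega>. S0 x \<ge> 0 \<and> I0 x \<ge> 0"
      "(LINT x:\<Omega>|lborel. I0 x) > 0"
    and Sstar: "continuous_on (closure \<Omega>) Sstar" "\<forall>x\<in>closure \<Omega>. Sstar x > 0"
      "\<forall>x\<in>\<Omega>. dS * (LINT y|lborel. J (x - y) * (indicator \<Omega> y * Sstar y - Sstar x))
                 + \<Lambda> x = 0"
    and sol_cont: "continuous_on (closure \<Omega> \<times> {0..}) (\<lambda>(x, t). S x t)"
      "continuous_on (closure \<Omega> \<times> {0..}) (\<lambda>(x, t). I x t)"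
    and sol_nonneg: "\<forall>x\<in>closure \<Omega>. \<forall>t\<ge>0. S x t \<ge> 0 \<and> I x t \<ge> 0"
    and sol_init: "\<forall>x\<in>closure \<Omega>. S x 0 = S0 x \<and> I x 0 = I0 x"
    and sol_S: "\<forall>x\<in>\<Omega>. \<forall>t>0. ((S x) has_real_derivative
        (dS * (LINT y|lborel. J (x - y) * (indicator \<Omega> y * S y t - S x t))
         + \<Lambda> x - \<beta> x * incid (S x t) (I x t) + \<gamma> x * I x t)) (at t)"
    and sol_I: "\<forall>x\<in>\<Omega>. \<forall>t>0. ((I x) has_real_derivative
        (dI * (LINT y|lborel. J (x - y) * (indicator \<Omega> y * I y t - I x t))
         + \<beta> x * incid (S x t) (I x t) - \<gamma> x * I x t)) (at t)"
    and R0: "R0 \<Omega> J dI \<gamma> \<beta> < 1"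
  shows "uniform_limit (closure \<Omega>) (\<lambda>t x. S x t) Sstar at_top
       \<and> uniform_limit (closure \<Omega>) (\<lambda>t x. I x t) (\<lambda>x. 0) at_top"
proof -
  interpret next_generation \<Omega> J dI \<gamma> \<beta>
    by unfold_locales (use dom diff coeff kernel in auto)
  obtain C \<epsilon> where C: "0 \<le> C" "0 < \<epsilon>" and I_le: "\<And>x t. x \<in> K \<Longrightarrow> 0 \<le> t \<Longrightarrow> I x t \<le> C * exp (- \<epsilon> * t)"
    using SIS_infected_exp_decay[OF R0 sol_cont sol_nonneg sol_I] by blast
  have "uniform_limit K (\<lambda>t x. S x t) Sstar at_top"
    using coeff(4) Sstar(2,3)
    by (intro SIS_susceptible_uniform_convergence[OF diff(1) coeff(1) _ Sstar(1) _ _ sol_cont sol_nonneg sol_S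
          I_le C]) auto
  moreover have "uniform_limit K (\<lambda>t x. I x t) (\<lambda>x. 0) at_top"
    using I_le sol_nonneg C by (intro uniform_limit_exp_squeeze[where C'=0 and \<epsilon>'=1]) auto
  ultimately show ?thesis by simp
qed

end
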